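(* In the V-trace setting of the context, assume $|\mathcal S|\ge2$, let $\gamma$ be the contraction factor and $A$ the noise constant described in the context, and let $\epsilon_k=\frac{\epsilon}{k+K}$ with $\epsilon=\frac{4}{1-\gamma}$ and $K=\frac{64(A+2)\log|\mathcal S|}{(1-\gamma)^3}$. Then for all $k\ge0$, $$\mathbb{E}[\|V_k-V_{\pi_{\bar\rho}}\|_\infty^2]\le1024e^2\big(\|V_0-V_{\pi_{\bar\rho}}\|_\infty^2+2\|V_{\pi_{\bar\rho}}\|_\infty^2+1\big)\frac{(A+2)\log|\mathcal S|}{(1-\gamma)^3}\frac{1}{k+K}.$$
   Context: Finite MDP: finite state space $\mathcal S$, finite action space $\mathcal A$, transition matrices $P_a(s,s')$, reward $\mathcal R:\mathcal S\times\mathcal A\to[0,1]$, discount $\beta\in(0,1)$. A policy $\pi$ gives probabilities $\pi(a|s)$; its value function is $V_\pi(s)=\mathbb{E}_\pi[\sum_{k\ge0}\beta^k\mathcal R(S_k,A_k)\mid S_0=s]$. Let $\pi$ (target) and $\pi'$ (behavior) be policies with $\{a:\pi(a|s)>0\}\subseteq\{a:\pi'(a|s)>0\}$ for all $s$. Fix truncation levels $\bar\rho\ge\bar c>0$ and horizon $n\ge1$. For a trajectory under $\pi'$, $c_t=\min(\bar c,\pi(A_t|S_t)/\pi'(A_t|S_t))$, $\rho_t=\min(\bar\rho,\pi(A_t|S_t)/\pi'(A_t|S_t))$, empty products equal $1$. The V-trace algorithm: given deterministic $V_0$ and stepsizes $\epsilon_k$, at each iteration $k$, for each $s$ a fresh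 trajectory $S_0^s=s,A_0^s,\dots,S_n^s$ is generated under $\pi'$ (independently of the past given the current iterate), with weights $c_t^s,\rho_t^s$, and $V_{k+1}(s)=V_k(s)+\epsilon_k\sum_{t=0}^{n-1}\beta^t(\prod_{j=0}^{t-1}c_j^s)\rho_t^s(\mathcal R(S_t^s,A_t^s)+\beta V_k(S_{t+1}^s)-V_k(S_t^s))$. Let $\kappa_c=\min_s\mathbb{E}_{\pi'}[c_0\mid S_0=s]$, $\kappa_\rho=\min_s\mathbb{E}_{\pi'}[\rho_0\mid S_0=s]$, $\gamma=1-\frac{(1-\beta)(1-(\beta\kappa_c)^n)\kappa_\rho}{1-\beta\kappa_c}$. Let $A=\frac{32\bar\rho^2}{(1-\beta\bar c)^2}$ if $\beta\bar c<1$, $A=32\bar\rho^2n^2$ if $\beta\bar c=1$, $A=\frac{32\bar\rho^2(\beta\bar c)^{2n}}{(\beta\bar c-1)^2}$ if $\beta\bar c>1$. Let $\pi_{\bar\rho}(a|s)=\frac{\min(\bar\rho\pi'(a|s),\pi(a|s))}{\sum_b\min(\bar\rho\pi'(b|s),\pi(b|s))}$ and $V_{\pi_{\bar\rho}}$ its value function. *)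

theory Defs
  imports "HOL-Probability.Probability"
begin

text \<open>Finite MDP: states 's::finite, actions 'a::finite, transitions P a s :: 's pmf
  (so P_a(s,s') = pmf (P a s) s'), reward R s a, discount beta.
  Stochastic policies as pmfs: pi(a|s) = pmf (pol s) a.\<close>

fun exp_reward :: "('a \<Rightarrow> 's \<Rightarrow> 's pmf) \<Rightarrow> ('s \<Rightarrow> 'a \<Rightarrow> real) \<Rightarrow> ('s::finite \<Rightarrow> 'a::finite \<Rightarrow> real) \<Rightarrow> nat \<Rightarrow> 's \<Rightarrow> real" where
  "exp_reward P R pol 0 s = (\<Sum>a\<in>UNIV. pol s a * R s a)"
| "exp_reward P R pol (Suc k) s =
     (\<Sum>a\<in>UNIV. pol s a * (\<Sum>s'\<in>UNIV. pmf (P a s) s' * exp_reward P R pol k s'))"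

definition value_fun :: "('a \<Rightarrow> 's \<Rightarrow> 's pmf) \<Rightarrow> ('s \<Rightarrow> 'a \<Rightarrow> real) \<Rightarrow> real \<Rightarrow> ('s::finite \<Rightarrow> 'a::finite \<Rightarrow> real) \<Rightarrow> 's \<Rightarrow> real" where
  "value_fun P R \<beta> pol s = (\<Sum>k. \<beta> ^ k * exp_reward P R pol k s)"

definition clipped_policy :: "real \<Rightarrow> ('s \<Rightarrow> 'a pmf) \<Rightarrow> ('s \<Rightarrow> 'a pmf) \<Rightarrow> 's \<Rightarrow> 'a::finite \<Rightarrow> real" where
  "clipped_policy \<rho>bar \<pi> \<pi>' s a =
     min (\<rho>bar * pmf (\<pi>' s) a) (pmf (\<pi> s) a) / (\<Sum>b\<in>UNIV. min (\<rho>bar * pmf (\<pi>' s) b) (pmf (\<pi> s) b))"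

text \<open>Trajectory of length n under behaviour policy: list of (S_t, A_t) for t < n, and S_n.\<close>
fun traj :: "('a \<Rightarrow> 's \<Rightarrow> 's pmf) \<Rightarrow> ('s \<Rightarrow> 'a pmf) \<Rightarrow> nat \<Rightarrow> 's \<Rightarrow> (('s \<times> 'a) list \<times> 's) pmf" where
  "traj P \<pi>' 0 s = return_pmf ([], s)"
| "traj P \<pi>' (Suc n) s =
     do { a \<leftarrow> \<pi>' s; s' \<leftarrow> P a s; (tr, sf) \<leftarrow> traj P \<pi>' n s'; return_pmf ((s, a) # tr, sf) }"

definition traj_state :: "('s \<times> 'a) list \<times> 's \<Rightarrow> nat \<Rightarrow> 's" where
  "traj_state \<tau> t = (if t < length (fst \<tau>) then fst (fst \<tau> ! t) else snd \<tau>)"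

definition traj_action :: "('s \<times> 'a) list \<times> 's \<Rightarrow> nat \<Rightarrow> 'a" where
  "traj_action \<tau> t = snd (fst \<tau> ! t)"

definition is_ratio :: "('s \<Rightarrow> 'a pmf) \<Rightarrow> ('s \<Rightarrow> 'a pmf) \<Rightarrow> 's \<Rightarrow> 'a \<Rightarrow> real" where
  "is_ratio \<pi> \<pi>' s a = pmf (\<pi> s) a / pmf (\<pi>' s) a"

definition vtrace_incr ::
  "('s \<Rightarrow> 'a \<Rightarrow> real) \<Rightarrow> real \<Rightarrow> ('s \<Rightarrow> 'a pmf) \<Rightarrow> ('s \<Rightarrow> 'a pmf) \<Rightarrow> real \<Rightarrow> real \<Rightarrow> nat
   \<Rightarrow> ('s \<Rightarrow> real) \<Rightarrow> ('s \<times> 'a) list \<times> 's \<Rightarrow> real" where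
  "vtrace_incr R \<beta> \<pi> \<pi>' cbar \<rho>bar n V \<tau> =
     (\<Sum>t<n. \<beta> ^ t
        * (\<Prod>j<t. min cbar (is_ratio \<pi> \<pi>' (traj_state \<tau> j) (traj_action \<tau> j)))
        * min \<rho>bar (is_ratio \<pi> \<pi>' (traj_state \<tau> t) (traj_action \<tau> t))
        * (R (traj_state \<tau> t) (traj_action \<tau> t) + \<beta> * V (traj_state \<tau> (Suc t)) - V (traj_state \<tau> t)))"

fun vtrace_dist ::
  "('a \<Rightarrow> 's \<Rightarrow> 's pmf) \<Rightarrow> ('s \<Rightarrow> 'a \<Rightarrow> real) \<Rightarrow> real \<Rightarrow> ('s::finite \<Rightarrow> 'a pmf) \<Rightarrow> ('s \<Rightarrow> 'a pmf)
   \<Rightarrow> real \<Rightarrow> real \<Rightarrow> nat \<Rightarrow> (nat \<Rightarrow> real) \<Rightarrow> ('s \<Rightarrow> real) \<Rightarrow> nat \<Rightarrow> ('s \<Rightarrow> real) pmf" where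
  "vtrace_dist P R \<beta> \<pi> \<pi>' cbar \<rho>bar n \<epsilon> V0 0 = return_pmf V0"
| "vtrace_dist P R \<beta> \<pi> \<pi>' cbar \<rho>bar n \<epsilon> V0 (Suc k) =
     do { V \<leftarrow> vtrace_dist P R \<beta> \<pi> \<pi>' cbar \<rho>bar n \<epsilon> V0 k;
          \<tau>s \<leftarrow> Pi_pmf UNIV undefined (\<lambda>s. traj P \<pi>' n s);
          return_pmf (\<lambda>s. V s + \<epsilon> k * vtrace_incr R \<beta> \<pi> \<pi>' cbar \<rho>bar n V (\<tau>s s)) }"

definition sup_norm :: "('s::finite \<Rightarrow> real) \<Rightarrow> real" where
  "sup_norm f = Max (range (\<lambda>s. \<bar>f s\<bar>))"

definition kappa_c :: "('s::finite \<Rightarrow> 'a pmf) \<Rightarrow> ('s \<Rightarrow> 'a pmf) \<Rightarrow> real \<Rightarrow> real" where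
  "kappa_c \<pi> \<pi>' cbar = Min (range (\<lambda>s. measure_pmf.expectation (\<pi>' s) (\<lambda>a. min cbar (is_ratio \<pi> \<pi>' s a))))"

definition kappa_rho :: "('s::finite \<Rightarrow> 'a pmf) \<Rightarrow> ('s \<Rightarrow> 'a pmf) \<Rightarrow> real \<Rightarrow> real" where
  "kappa_rho \<pi> \<pi>' \<rho>bar = Min (range (\<lambda>s. measure_pmf.expectation (\<pi>' s) (\<lambda>a. min \<rho>bar (is_ratio \<pi> \<pi>' s a))))"

definition vtrace_gamma :: "real \<Rightarrow> real \<Rightarrow> real \<Rightarrow> nat \<Rightarrow> real" where
  "vtrace_gamma \<beta> \<kappa>c \<kappa>\<rho> n = 1 - (1 - \<beta>) * (1 - (\<beta> * \<kappa>c) ^ n) * \<kappa>\<rho> / (1 - \<beta> * \<kappa>c)"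

definition vtrace_A :: "real \<Rightarrow> real \<Rightarrow> real \<Rightarrow> nat \<Rightarrow> real" where
  "vtrace_A \<beta> cbar \<rho>bar n =
     (if \<beta> * cbar < 1 then 32 * \<rho>bar\<^sup>2 / (1 - \<beta> * cbar)\<^sup>2
      else if \<beta> * cbar = 1 then 32 * \<rho>bar\<^sup>2 * (real n)\<^sup>2
      else 32 * \<rho>bar\<^sup>2 * (\<beta> * cbar) ^ (2 * n) / (\<beta> * cbar - 1)\<^sup>2)"

end

theory Submission
  imports Defs "HOL-Analysis.Harmonic_Numbers"
begin

text \<open>The error x = V - V_clipped is measured by the smooth Lyapunov function
  (norm2m m x)^2, the squared 2m-norm: it is (2m - 1)-smooth and lies between (sup_norm x)^2 and
  N^(1/m) (sup_norm x)^2, where N is the number of states. The clipped value function is the fixed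
  point of the expected V-trace operator, which is a gamma-contraction in the sup norm, so the
  expected increment is a descent direction for the Lyapunov function: one step of size eps
  multiplies it by 1 - 2 eps (1 - N^(1/(2m)) gamma) and adds a noise term of order eps^2 A.
  For m of order ln N / (1 - gamma) both N^(1/m) and the loss N^(1/(2m)) are bounded constants,
  and with the given step sizes the expected Lyapunov function a_k obeys
  a_(k+1) \<le> (1 - 7 / (4 (k + K))) a_k + O(K / (k + K)^2), whence a_k = O(1 / (k + K)).\<close>

section \<open>Smooth surrogates of the sup norm\<close>

lemma Youngs_inequality_0_nonneg:
  fixes a b :: real
  assumes "0 \<le> \<alpha>" "0 \<le> \<beta>" "\<alpha> + \<beta> = 1" "0 \<le> a" "0 \<le> b"
  shows "a powr \<alpha> * b powr \<beta> \<le> \<alpha> * a + \<beta> * b"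
proof (cases "a = 0 \<or> b = 0")
  case True
  then show ?thesis using assms by auto
next
  case False
  then show ?thesis using assms Youngs_inequality_0[of \<alpha> \<beta> a b] by auto
qed

lemma Holder_inequality_sum:
  fixes u v :: "'i \<Rightarrow> real"
  assumes I: "finite I" and u: "\<And>i. i \<in> I \<Longrightarrow> 0 \<le> u i" and v: "\<And>i. i \<in> I \<Longrightarrow> 0 \<le> v i"
    and \<alpha>\<beta>: "0 \<le> \<alpha>" "0 \<le> \<beta>" "\<alpha> + \<beta> = 1"
  shows "(\<Sum>i\<in>I. u i powr \<alpha> * v i powr \<beta>) \<le> (\<Sum>i\<in>I. u i) powr \<alpha> * (\<Sum>i\<in>I. v i) powr \<beta>"
proof -
  define U where "U = (\<Sum>i\<in>I. u i)"
  define V where "V = (\<Sum>i\<in>I. v i)"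
  have "0 \<le> U" "0 \<le> V" using u v by (auto simp: U_def V_def intro: sum_nonneg)
  show ?thesis
  proof (cases "U = 0 \<or> V = 0")
    case True
    then have "\<forall>i\<in>I. u i = 0 \<or> v i = 0"
      using sum_nonneg_eq_0_iff[OF I] u v unfolding U_def V_def by blast
    then have "(\<Sum>i\<in>I. u i powr \<alpha> * v i powr \<beta>) = 0" by (intro sum.neutral) auto
    then show ?thesis by simp
  next
    case False
    with \<open>0 \<le> U\<close> \<open>0 \<le> V\<close> have UV: "0 < U" "0 < V" by auto
    \<comment> \<open>Young's inequality for the normalised vectors, summed over I\<close>
    have "u i powr \<alpha> * v i powr \<beta> \<le> U powr \<alpha> * V powr \<beta> * (\<alpha> * (u i / U) + \<beta> * (v i / V))"
      if i: "i \<in> I" for i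
    proof -
      have "(u i / U) powr \<alpha> * (v i / V) powr \<beta> \<le> \<alpha> * (u i / U) + \<beta> * (v i / V)"
        using Youngs_inequality_0_nonneg[OF \<alpha>\<beta>, of "u i / U" "v i / V"] u[OF i] v[OF i] UV by auto
      moreover have "u i powr \<alpha> * v i powr \<beta> = U powr \<alpha> * V powr \<beta> * ((u i / U) powr \<alpha> * (v i / V) powr \<beta>)"
        using u[OF i] v[OF i] UV by (simp add: powr_divide)
      ultimately show ?thesis using UV by (simp add: mult_left_mono)
    qed
    then have "(\<Sum>i\<in>I. u i powr \<alpha> * v i powr \<beta>)
        \<le> (\<Sum>i\<in>I. U powr \<alpha> * V powr \<beta> * (\<alpha> * (u i / U) + \<beta> * (v i / V)))"
      by (rule sum_mono)
    also have "\<dots> = U powr \<alpha> * V powr \<beta> * (\<alpha> * (\<Sum>i\<in>I. u i) / U + \<beta> * (\<Sum>i\<in>I. v i) / V)"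
      by (simp add: sum_distrib_left sum.distrib sum_divide_distrib[symmetric] algebra_simps)
    also have "\<dots> = U powr \<alpha> * V powr \<beta>"
      using UV \<alpha>\<beta> by (simp add: U_def[symmetric] V_def[symmetric])
    finally show ?thesis by (simp add: U_def V_def)
  qed
qed

definition even_moment :: "nat \<Rightarrow> ('s::finite \<Rightarrow> real) \<Rightarrow> real" where
  "even_moment m x = (\<Sum>s\<in>UNIV. x s ^ (2 * m))"

definition norm2m :: "nat \<Rightarrow> ('s::finite \<Rightarrow> real) \<Rightarrow> real" where
  "norm2m m x = even_moment m x powr (1 / (2 * real m))"

text \<open>The directional derivative of the square of norm2m m at x in direction y.\<close>
definition norm2m_sq_deriv :: "nat \<Rightarrow> ('s::finite \<Rightarrow> real) \<Rightarrow> ('s \<Rightarrow> real) \<Rightarrow> real" where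
  "norm2m_sq_deriv m x y =
     2 * even_moment m x powr (1 / real m - 1) * (\<Sum>s\<in>UNIV. x s ^ (2 * m - 1) * y s)"

lemma even_moment_nonneg: "0 \<le> even_moment m x"
  unfolding even_moment_def by (intro sum_nonneg) (simp add: zero_le_even_power)

lemma even_moment_eq_0_iff: "0 < m \<Longrightarrow> even_moment m x = 0 \<longleftrightarrow> x = (\<lambda>_. 0)"
  unfolding even_moment_def
  by (subst sum_nonneg_eq_0_iff) (auto simp: zero_le_even_power fun_eq_iff)

lemma norm2m_nonneg: "0 \<le> norm2m m x"
  by (simp add: norm2m_def)

lemma norm2m_sq: "(norm2m m x)\<^sup>2 = even_moment m x powr (1 / real m)"
  by (simp add: norm2m_def power2_eq_square powr_add[symmetric])

lemma even_power_powr: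
  fixes z :: real
  assumes "0 < k" "0 < m"
  shows "(z ^ (2 * m)) powr (real k / (2 * real m)) = \<bar>z\<bar> ^ k"
proof (cases "z = 0")
  case True
  then show ?thesis using assms by (simp add: power_0_left)
next
  case False
  have "z ^ (2 * m) = \<bar>z\<bar> powr real (2 * m)"
    using False by (subst powr_realpow) (auto simp: power_even_abs)
  then have "(z ^ (2 * m)) powr (real k / (2 * real m)) = (\<bar>z\<bar> powr real (2 * m)) powr (real k / (2 * real m))"
    by simp
  also have "\<dots> = \<bar>z\<bar> powr real k"
    using assms by (simp add: powr_powr)
  finally show ?thesis using False by (simp add: powr_realpow)
qed

lemma norm2m_power:
  assumes "0 < k"
  shows "norm2m m x ^ k = even_moment m x powr (real k / (2 * real m))"
proof (cases "even_moment m x = 0")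
  case True
  then show ?thesis using assms by (simp add: norm2m_def)
next
  case False
  then show ?thesis
    using even_moment_nonneg[of m x] by (auto simp: norm2m_def powr_power)
qed

lemma norm2m_scale:
  assumes "0 < m"
  shows "norm2m m (\<lambda>s. c * x s) = \<bar>c\<bar> * norm2m m x"
proof -
  have "even_moment m (\<lambda>s. c * x s) = \<bar>c\<bar> ^ (2 * m) * even_moment m x"
    by (simp add: even_moment_def power_mult_distrib sum_distrib_left power_even_abs)
  moreover have "(\<bar>c\<bar> ^ (2 * m)) powr (1 / (2 * real m)) = \<bar>c\<bar>"
    using even_power_powr[of 1 m "\<bar>c\<bar>"] assms by simp
  ultimately show ?thesis by (simp add: norm2m_def powr_mult)
qed

lemma norm2m_sq_deriv_self:
  assumes "0 < m"
  shows "norm2m_sq_deriv m x x = 2 * (norm2m m x)\<^sup>2"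
proof (cases "even_moment m x = 0")
  case True
  then show ?thesis by (simp add: norm2m_sq_deriv_def norm2m_sq)
next
  case False
  have "(\<Sum>s\<in>UNIV. x s ^ (2 * m - 1) * x s) = even_moment m x"
    unfolding even_moment_def using assms
    by (intro sum.cong refl) (simp add: power_Suc2[symmetric])
  then show ?thesis
    using False even_moment_nonneg[of m x]
    by (simp add: norm2m_sq_deriv_def norm2m_sq powr_diff)
qed

lemma norm2m_sq_deriv_scale: "norm2m_sq_deriv m x (\<lambda>s. c * y s) = c * norm2m_sq_deriv m x y"
  unfolding norm2m_sq_deriv_def by (simp add: sum_distrib_left algebra_simps)

lemma norm2m_sq_deriv_add:
  "norm2m_sq_deriv m x (\<lambda>s. y s + w s) = norm2m_sq_deriv m x y + norm2m_sq_deriv m x w"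
  unfolding norm2m_sq_deriv_def by (simp add: sum.distrib algebra_simps)

lemma sum_abs_power_mult_le_norm2m:
  fixes x y :: "'s::finite \<Rightarrow> real"
  assumes "0 < j" "j < 2 * m"
  shows "(\<Sum>s\<in>UNIV. \<bar>x s\<bar> ^ (2 * m - j) * \<bar>y s\<bar> ^ j) \<le> norm2m m x ^ (2 * m - j) * norm2m m y ^ j"
proof -
  define \<alpha> where "\<alpha> = real (2 * m - j) / (2 * real m)"
  define \<beta> where "\<beta> = real j / (2 * real m)"
  have m: "0 < m" using assms by simp
  have "\<bar>z\<bar> ^ (2 * m - j) = (z ^ (2 * m)) powr \<alpha>" for z :: real
    using even_power_powr[of "2 * m - j" m z] assms unfolding \<alpha>_def by simp
  moreover have "\<bar>z\<bar> ^ j = (z ^ (2 * m)) powr \<beta>" for z :: real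
    using even_power_powr[of j m z] assms unfolding \<beta>_def by simp
  ultimately have "(\<Sum>s\<in>UNIV. \<bar>x s\<bar> ^ (2 * m - j) * \<bar>y s\<bar> ^ j)
      = (\<Sum>s\<in>UNIV. (x s ^ (2 * m)) powr \<alpha> * (y s ^ (2 * m)) powr \<beta>)"
    by simp
  also have "\<dots> \<le> even_moment m x powr \<alpha> * even_moment m y powr \<beta>"
    unfolding even_moment_def using assms
    by (intro Holder_inequality_sum) (auto simp: \<alpha>_def \<beta>_def zero_le_even_power field_simps of_nat_diff)
  also have "\<dots> = norm2m m x ^ (2 * m - j) * norm2m m y ^ j"
    using assms by (simp add: norm2m_power \<alpha>_def \<beta>_def)
  finally show ?thesis .
qed

lemma norm2m_sq_deriv_le:
  assumes "0 < m"
  shows "norm2m_sq_deriv m x y \<le> 2 * norm2m m x * norm2m m y"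
proof (cases "even_moment m x = 0")
  case True
  then show ?thesis by (simp add: norm2m_sq_deriv_def norm2m_nonneg)
next
  case False
  then have pos: "0 < even_moment m x" using even_moment_nonneg[of m x] by linarith
  have "(\<Sum>s\<in>UNIV. x s ^ (2 * m - 1) * y s) \<le> (\<Sum>s\<in>UNIV. \<bar>x s\<bar> ^ (2 * m - 1) * \<bar>y s\<bar> ^ 1)"
    by (intro sum_mono) (metis abs_ge_self abs_mult power_abs power_one_right)
  also have "\<dots> \<le> norm2m m x ^ (2 * m - 1) * norm2m m y ^ 1"
    using assms by (intro sum_abs_power_mult_le_norm2m) auto
  finally have holder: "(\<Sum>s\<in>UNIV. x s ^ (2 * m - 1) * y s) \<le> norm2m m x ^ (2 * m - 1) * norm2m m y"
    by simp
  have exponent: "1 / real m - 1 + real (2 * m - 1) / (2 * real m) = 1 / (2 * real m)"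
    using assms by (simp add: of_nat_diff field_simps)
  have "even_moment m x powr (1 / real m - 1) * norm2m m x ^ (2 * m - 1)
      = even_moment m x powr (1 / real m - 1 + real (2 * m - 1) / (2 * real m))"
    by (subst norm2m_power) (use assms in \<open>simp_all add: powr_add\<close>)
  also have "\<dots> = norm2m m x"
    unfolding exponent norm2m_def ..
  finally have cancel: "even_moment m x powr (1 / real m - 1) * norm2m m x ^ (2 * m - 1) = norm2m m x" .
  have "norm2m_sq_deriv m x y
      \<le> 2 * even_moment m x powr (1 / real m - 1) * (norm2m m x ^ (2 * m - 1) * norm2m m y)"
    unfolding norm2m_sq_deriv_def using holder by (intro mult_left_mono) auto
  also have "\<dots> = 2 * norm2m m x * norm2m m y"
    by (metis cancel mult.assoc)
  finally show ?thesis .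
qed

lemma even_moment_powr_mult_sum_le:
  fixes z h :: "'s::finite \<Rightarrow> real"
  assumes m: "2 \<le> m" and pos: "0 < even_moment m z"
  shows "even_moment m z powr (1 / real m - 1) * (\<Sum>s\<in>UNIV. z s ^ (2 * m - 2) * (h s)\<^sup>2)
    \<le> (norm2m m h)\<^sup>2"
proof -
  have "(\<Sum>s\<in>UNIV. z s ^ (2 * m - 2) * (h s)\<^sup>2) = (\<Sum>s\<in>UNIV. \<bar>z s\<bar> ^ (2 * m - 2) * \<bar>h s\<bar> ^ 2)"
    using m by (intro sum.cong refl) (simp add: power_even_abs even_diff_nat)
  also have "\<dots> \<le> norm2m m z ^ (2 * m - 2) * (norm2m m h)\<^sup>2"
    using m by (intro sum_abs_power_mult_le_norm2m) auto
  finally have holder: "(\<Sum>s\<in>UNIV. z s ^ (2 * m - 2) * (h s)\<^sup>2) \<le> norm2m m z ^ (2 * m - 2) * (norm2m m h)\<^sup>2" .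
  have "1 / real m - 1 + real (2 * m - 2) / (2 * real m) = 0"
    using m by (simp add: of_nat_diff field_simps)
  then have cancel: "even_moment m z powr (1 / real m - 1) * norm2m m z ^ (2 * m - 2) = 1"
    using m pos by (simp add: norm2m_power powr_add[symmetric])
  show ?thesis
    using mult_left_mono[OF holder, of "even_moment m z powr (1 / real m - 1)"]
    by (simp add: cancel flip: mult.assoc)
qed

lemma Taylor_second_order_le:
  fixes f f' f'' :: "real \<Rightarrow> real"
  assumes f'': "\<And>t. f'' t \<le> C"
    and f': "\<And>t. (f has_real_derivative f' t) (at t)" and f'_deriv: "\<And>t. (f' has_real_derivative f'' t) (at t)"
  shows "f 1 \<le> f 0 + f' 0 + C / 2"
proof -
  define diff where "diff i = (if i = 0 then f else if i = 1 then f' else f'')" for i :: nat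
  have "\<exists>t. 0 < t \<and> t < 1 \<and> f 1 = (\<Sum>i<2. diff i 0 / fact i * (1 - 0) ^ i) + diff 2 t / fact 2 * (1 - 0) ^ 2"
    by (rule Taylor_up[where a=0]) (auto simp: diff_def f' f'_deriv less_2_cases_iff)
  then obtain t where "f 1 = f 0 + f' 0 + f'' t / 2"
    by (auto simp: diff_def numeral_2_eq_2 lessThan_Suc)
  then show ?thesis using f''[of t] by simp
qed

text \<open>The left-hand side is the second derivative of N(t) powr r, where N' and N'' are the
  derivatives of N.\<close>
lemma powr_second_deriv_le:
  fixes N N' N'' r :: real
  assumes "0 \<le> r" "r \<le> 1"
  shows "r * ((r - 1) * N powr (r - 2) * N' * N' + N powr (r - 1) * N'') \<le> r * (N powr (r - 1) * N'')"
proof -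
  have "(r - 1) * (N powr (r - 2) * (N' * N')) \<le> 0"
    using assms by (intro mult_nonpos_nonneg) auto
  then have "r * ((r - 1) * (N powr (r - 2) * (N' * N'))) \<le> 0"
    using assms(1) by (rule mult_nonneg_nonpos[rotated])
  then show ?thesis by (simp add: algebra_simps)
qed

lemma norm2m_sq_Taylor_bound_nonvanishing:
  fixes x h :: "'s::finite \<Rightarrow> real"
  assumes m: "2 \<le> m" and nz: "\<And>t. 0 < even_moment m (\<lambda>s. x s + t * h s)"
  shows "(norm2m m (\<lambda>s. x s + h s))\<^sup>2
    \<le> (norm2m m x)\<^sup>2 + norm2m_sq_deriv m x h + (2 * real m - 1) * (norm2m m h)\<^sup>2"
proof -
  define z where "z t s = x s + t * h s" for t s
  define N where "N t = even_moment m (z t)" for t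
  define N1 where "N1 t = (\<Sum>s\<in>UNIV. real (2 * m) * z t s ^ (2 * m - 1) * h s)" for t
  define N2 where "N2 t = (\<Sum>s\<in>UNIV. real (2 * m) * real (2 * m - 1) * z t s ^ (2 * m - 2) * (h s)\<^sup>2)" for t
  define r where "r = 1 / real m"
  define \<psi> where "\<psi> t = N t powr r" for t
  define \<psi>1 where "\<psi>1 t = r * N t powr (r - 1) * N1 t" for t
  define \<psi>2 where "\<psi>2 t = r * ((r - 1) * N t powr (r - 2) * N1 t * N1 t + N t powr (r - 1) * N2 t)" for t
  have pos: "0 < N t" for t using nz unfolding N_def z_def by auto
  have dN: "(N has_real_derivative N1 t) (at t)" for t
    unfolding N_def even_moment_def N1_def z_def by (auto intro!: DERIV_sum derivative_eq_intros)
  have dN1: "(N1 has_real_derivative N2 t) (at t)" for t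
    unfolding N2_def N1_def z_def using m
    by (auto intro!: DERIV_sum derivative_eq_intros simp: power2_eq_square algebra_simps numeral_2_eq_2)
  have d\<psi>: "(\<psi> has_real_derivative \<psi>1 t) (at t)" for t
    unfolding \<psi>_def \<psi>1_def using pos[of t] dN[of t]
    by (auto intro!: derivative_eq_intros simp: algebra_simps)
  have d\<psi>1: "(\<psi>1 has_real_derivative \<psi>2 t) (at t)" for t
    unfolding \<psi>1_def \<psi>2_def using pos[of t] dN[of t] dN1[of t]
    by (auto intro!: derivative_eq_intros simp: algebra_simps)
  have "\<psi>2 t \<le> 2 * ((2 * real m - 1) * (norm2m m h)\<^sup>2)" for t
  proof -
    have "\<psi>2 t \<le> r * (N t powr (r - 1) * N2 t)"
      unfolding \<psi>2_def using m by (intro powr_second_deriv_le) (auto simp: r_def)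
    also have "\<dots> = r * real (2 * m) * real (2 * m - 1)
        * (N t powr (r - 1) * (\<Sum>s\<in>UNIV. z t s ^ (2 * m - 2) * (h s)\<^sup>2))"
      unfolding N2_def by (simp add: sum_distrib_left algebra_simps)
    also have "\<dots> \<le> r * real (2 * m) * real (2 * m - 1) * (norm2m m h)\<^sup>2"
      unfolding r_def N_def
      using even_moment_powr_mult_sum_le[OF m pos[unfolded N_def], of t h] by (intro mult_left_mono) auto
    also have "\<dots> = 2 * ((2 * real m - 1) * (norm2m m h)\<^sup>2)"
      using m by (simp add: r_def of_nat_diff)
    finally show ?thesis .
  qed
  then have "\<psi> 1 \<le> \<psi> 0 + \<psi>1 0 + 2 * ((2 * real m - 1) * (norm2m m h)\<^sup>2) / 2"
    using d\<psi> d\<psi>1 by (rule Taylor_second_order_le)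
  moreover have "\<psi> 0 = (norm2m m x)\<^sup>2" "\<psi> 1 = (norm2m m (\<lambda>s. x s + h s))\<^sup>2"
    unfolding \<psi>_def N_def r_def z_def norm2m_sq by simp_all
  moreover have "\<psi>1 0 = norm2m_sq_deriv m x h"
    unfolding \<psi>1_def norm2m_sq_deriv_def N_def N1_def r_def z_def using m
    by (simp add: sum_distrib_left algebra_simps)
  ultimately show ?thesis by linarith
qed

lemma norm2m_sq_Taylor_bound:
  fixes x h :: "'s::finite \<Rightarrow> real"
  assumes m: "2 \<le> m"
  shows "(norm2m m (\<lambda>s. x s + h s))\<^sup>2
    \<le> (norm2m m x)\<^sup>2 + norm2m_sq_deriv m x h + (2 * real m - 1) * (norm2m m h)\<^sup>2"
proof (cases "\<forall>t. 0 < even_moment m (\<lambda>s. x s + t * h s)")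
  case True
  then show ?thesis using norm2m_sq_Taylor_bound_nonvanishing[OF m] by blast
next
  case False
  then obtain t where "even_moment m (\<lambda>s. x s + t * h s) = 0"
    using even_moment_nonneg by (metis less_eq_real_def)
  then have "(\<lambda>s. x s + t * h s) = (\<lambda>_. 0)" by (subst (asm) even_moment_eq_0_iff) (use m in auto)
  then have xt: "\<And>s. x s + t * h s = 0" by (simp add: fun_eq_iff)
  have coef: "1 \<le> 2 * real m - 1" using m by simp
  show ?thesis
  proof (cases "t = 0")
    case True
    then have "x = (\<lambda>_. 0)" using xt by auto
    moreover have "norm2m m x = 0" "norm2m_sq_deriv m x h = 0"
      using m \<open>x = (\<lambda>_. 0)\<close> by (simp_all add: norm2m_def norm2m_sq_deriv_def even_moment_def)
    ultimately show ?thesis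
      using mult_right_mono[OF coef, of "(norm2m m h)\<^sup>2"] by simp
  next
    case False
    \<comment> \<open>on a degenerate line h is a multiple of x, and the bound is a quadratic inequality in the factor\<close>
    define u where "u = - 1 / t"
    have hu: "h = (\<lambda>s. u * x s)" using xt False
      by (auto simp: fun_eq_iff u_def field_simps) (metis add.commute add_eq_0_iff mult.commute)
    have "(\<lambda>s. x s + h s) = (\<lambda>s. (1 + u) * x s)" by (simp add: hu algebra_simps)
    then have "(norm2m m (\<lambda>s. x s + h s))\<^sup>2 = (1 + u)\<^sup>2 * (norm2m m x)\<^sup>2"
      using m by (simp add: norm2m_scale power_mult_distrib)
    also have "\<dots> \<le> (norm2m m x)\<^sup>2 + 2 * u * (norm2m m x)\<^sup>2 + (2 * real m - 1) * (u\<^sup>2 * (norm2m m x)\<^sup>2)"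
    proof -
      have "u\<^sup>2 * (norm2m m x)\<^sup>2 \<le> (2 * real m - 1) * (u\<^sup>2 * (norm2m m x)\<^sup>2)"
        using mult_right_mono[OF coef, of "u\<^sup>2 * (norm2m m x)\<^sup>2"] by simp
      moreover have "(1 + u)\<^sup>2 * (norm2m m x)\<^sup>2 = (norm2m m x)\<^sup>2 + 2 * u * (norm2m m x)\<^sup>2 + u\<^sup>2 * (norm2m m x)\<^sup>2"
        by (simp add: power2_eq_square algebra_simps)
      ultimately show ?thesis by linarith
    qed
    also have "\<dots> = (norm2m m x)\<^sup>2 + norm2m_sq_deriv m x h + (2 * real m - 1) * (norm2m m h)\<^sup>2"
      using m by (simp add: hu norm2m_scale norm2m_sq_deriv_scale norm2m_sq_deriv_self power_mult_distrib)
    finally show ?thesis .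
  qed
qed

lemma sup_norm_ge: "\<bar>x s\<bar> \<le> sup_norm x"
  unfolding sup_norm_def by (rule Max_ge) auto

lemma sup_norm_nonneg: "0 \<le> sup_norm x"
  using sup_norm_ge[of x undefined] by linarith

lemma sup_norm_le: "(\<And>s. \<bar>x s\<bar> \<le> c) \<Longrightarrow> sup_norm x \<le> c"
  unfolding sup_norm_def by (subst Max_le_iff) auto

lemma sup_norm_attained: "\<exists>s. \<bar>x s\<bar> = sup_norm x"
proof -
  have "sup_norm x \<in> range (\<lambda>s. \<bar>x s\<bar>)" unfolding sup_norm_def by (rule Max_in) auto
  then show ?thesis by auto
qed

lemma sup_norm_triangle: "sup_norm (\<lambda>s. x s + y s) \<le> sup_norm x + sup_norm y"
  by (rule sup_norm_le) (metis abs_triangle_ineq add_mono order_trans sup_norm_ge)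

lemma sup_norm_le_norm2m:
  assumes "0 < m"
  shows "sup_norm x \<le> norm2m m x"
proof -
  obtain s0 where s0: "\<bar>x s0\<bar> = sup_norm x" using sup_norm_attained by blast
  have "(sup_norm x) ^ (2 * m) \<le> even_moment m x"
    unfolding even_moment_def s0[symmetric] power_even_abs[of "2 * m", simplified]
    by (rule member_le_sum) (auto simp: zero_le_even_power)
  then have "((sup_norm x) ^ (2 * m)) powr (1 / (2 * real m)) \<le> norm2m m x"
    unfolding norm2m_def by (intro powr_mono2) auto
  then show ?thesis using even_power_powr[of 1 m, simplified] assms sup_norm_nonneg[of x] by simp
qed

lemma norm2m_le_sup_norm:
  fixes x :: "'s::finite \<Rightarrow> real"
  assumes "0 < m"
  shows "norm2m m x \<le> real CARD('s) powr (1 / (2 * real m)) * sup_norm x"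
proof -
  have "even_moment m x \<le> (\<Sum>s\<in>(UNIV::'s set). (sup_norm x) ^ (2 * m))"
    unfolding even_moment_def
  proof (rule sum_mono)
    fix s
    have "\<bar>x s\<bar> ^ (2 * m) \<le> (sup_norm x) ^ (2 * m)" by (intro power_mono sup_norm_ge) simp
    then show "x s ^ (2 * m) \<le> (sup_norm x) ^ (2 * m)" by (simp add: power_even_abs)
  qed
  then have "norm2m m x \<le> (real CARD('s) * (sup_norm x) ^ (2 * m)) powr (1 / (2 * real m))"
    unfolding norm2m_def using even_moment_nonneg by (intro powr_mono2) auto
  also have "\<dots> = real CARD('s) powr (1 / (2 * real m)) * sup_norm x"
    using even_power_powr[of 1 m, simplified] assms sup_norm_nonneg[of x] by (simp add: powr_mult)
  finally show ?thesis .
qed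

lemma norm2m_sq_le_sup_norm_sq:
  fixes x :: "'s::finite \<Rightarrow> real"
  assumes "0 < m"
  shows "(norm2m m x)\<^sup>2 \<le> real CARD('s) powr (1 / real m) * (sup_norm x)\<^sup>2"
proof -
  have "(norm2m m x)\<^sup>2 \<le> (real CARD('s) powr (1 / (2 * real m)) * sup_norm x)\<^sup>2"
    using norm2m_le_sup_norm[OF assms] norm2m_nonneg by (intro power_mono) auto
  also have "\<dots> = real CARD('s) powr (1 / real m) * (sup_norm x)\<^sup>2"
    by (simp add: power_mult_distrib power2_eq_square powr_add[symmetric])
  finally show ?thesis .
qed

lemma norm2m_sq_Taylor_bound_sup_norm:
  fixes x h :: "'s::finite \<Rightarrow> real"
  assumes m: "2 \<le> m" and h: "sup_norm h \<le> B"
  shows "(norm2m m (\<lambda>s. x s + h s))\<^sup>2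
    \<le> (norm2m m x)\<^sup>2 + norm2m_sq_deriv m x h + (2 * real m - 1) * real CARD('s) powr (1 / real m) * B\<^sup>2"
proof -
  have "(sup_norm h)\<^sup>2 \<le> B\<^sup>2" using h sup_norm_nonneg by (intro power_mono) auto
  moreover have "(norm2m m h)\<^sup>2 \<le> real CARD('s) powr (1 / real m) * (sup_norm h)\<^sup>2"
    using m by (intro norm2m_sq_le_sup_norm_sq) simp
  ultimately have "(2 * real m - 1) * (norm2m m h)\<^sup>2 \<le> (2 * real m - 1) * (real CARD('s) powr (1 / real m) * B\<^sup>2)"
    using m by (intro mult_left_mono) (auto intro: order_trans mult_left_mono)
  then show ?thesis using norm2m_sq_Taylor_bound[OF m, of x h] by (simp add: mult.assoc)
qed

lemma exp_half_mult_one_minus_le: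
  fixes u :: real
  assumes "0 < u" "u \<le> 1"
  shows "exp (u / 2) * (1 - u) \<le> 1 - u / 2"
proof -
  have pos: "0 < 1 - u / 2" using assms by simp
  have "exp (u / 2) * (1 - u / 2) \<le> exp (u / 2) * exp (- (u / 2))"
    using exp_ge_add_one_self[of "- (u / 2)"] by (intro mult_left_mono) auto
  then have "exp (u / 2) \<le> 1 / (1 - u / 2)" using pos by (simp add: exp_minus field_simps)
  then have "exp (u / 2) * (1 - u) \<le> (1 - u) / (1 - u / 2)"
    using mult_right_mono[of "exp (u / 2)" "1 / (1 - u / 2)" "1 - u"] assms by simp
  also have "\<dots> \<le> 1 - u / 2"
    using pos zero_le_power2[of "u / 2"] by (simp add: field_simps power2_eq_square)
  finally show ?thesis .
qed

text \<open>The exponent m of the smooth surrogate norm2m m has to be of order ln N / u: large enough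
  that norm2m m is within a factor N powr (1 / (2 * m)) \<le> exp (u / 2) of the sup norm, and small
  enough that its smoothness constant 2 m - 1 stays of order ln N / u.\<close>
lemma exists_smoothing_exponent:
  fixes N u :: real
  assumes N: "2 \<le> N" and u: "0 < u" "u \<le> 1"
  obtains m :: nat where "2 \<le> m" "2 * real m - 1 \<le> 8 * (ln N / u)" "N powr (1 / real m) \<le> 3"
    "N powr (1 / (2 * real m)) * (1 - u) \<le> 1 - u / 2"
proof
  define L where "L = ln N"
  have "ln 2 \<le> L" unfolding L_def using N by simp
  then have L: "1 / 2 \<le> L" using ln2_ge_two_thirds by linarith
  have "L \<le> L / u" using u L by (simp add: field_simps mult_left_le)
  then have Lu: "1 / 2 \<le> L / u" using L by linarith
  define m where "m = nat \<lceil>L / u\<rceil> + 1"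
  have ceil: "L / u \<le> of_int \<lceil>L / u\<rceil>" "of_int \<lceil>L / u\<rceil> \<le> L / u + 1" "1 \<le> \<lceil>L / u\<rceil>"
    using Lu u by (auto simp: le_of_int_ceiling of_int_ceiling_le_add_one one_le_ceiling)
  then have rm: "real m = of_int \<lceil>L / u\<rceil> + 1" by (simp add: m_def)
  show "2 \<le> m" using ceil(3) by (simp add: m_def le_nat_iff)
  show "2 * real m - 1 \<le> 8 * (ln N / u)" using rm ceil Lu unfolding L_def by linarith
  have "L / u \<le> real m" using rm ceil by linarith
  then have "L \<le> u * real m" using u by (simp add: divide_le_eq mult.commute)
  moreover have "0 < real m" using rm ceil(3) by linarith
  ultimately have Lm: "L / real m \<le> u" by (simp add: divide_le_eq mult.commute)
  have "N powr (1 / real m) = exp (L / real m)" using N by (simp add: powr_def L_def)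
  also have "\<dots> \<le> exp 1" using Lm u by simp
  also have "\<dots> \<le> 3" by (rule exp_le)
  finally show "N powr (1 / real m) \<le> 3" .
  have "N powr (1 / (2 * real m)) = exp (L / real m / 2)" using N by (simp add: powr_def L_def)
  also have "\<dots> \<le> exp (u / 2)" using Lm by simp
  finally have "N powr (1 / (2 * real m)) * (1 - u) \<le> exp (u / 2) * (1 - u)"
    using u by (intro mult_right_mono) auto
  also have "\<dots> \<le> 1 - u / 2" by (rule exp_half_mult_one_minus_le[OF u])
  finally show "N powr (1 / (2 * real m)) * (1 - u) \<le> 1 - u / 2" .
qed

section \<open>Step-size arithmetic\<close>

lemma noise_coeff_le:
  fixes m :: nat and c1 L u A M :: real
  assumes "2 \<le> m" "2 * real m - 1 \<le> 8 * (L / u)" "c1 \<le> 3" "0 \<le> c1" "0 < u" "0 \<le> A" "0 < M"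
  shows "(3 / 8) * (2 * real m - 1) * c1 * ((4 / u) / M)\<^sup>2 * A \<le> 9 * (64 * (A + 2) * L / u ^ 3) / (4 * M\<^sup>2)"
proof -
  have "3 \<le> 8 * (L / u)" using assms(1,2) by linarith
  then have L: "0 \<le> L" using assms(5) by (simp add: field_simps)
  have "(2 * real m - 1) * c1 \<le> 8 * (L / u) * 3"
    using assms by (intro mult_mono) auto
  then have "(3 / 8) * ((2 * real m - 1) * c1) * (((4 / u) / M)\<^sup>2 * A) \<le> (3 / 8) * (8 * (L / u) * 3) * (((4 / u) / M)\<^sup>2 * A)"
    using assms by (intro mult_right_mono mult_left_mono) auto
  also have "\<dots> = 144 * L * A / (u ^ 3 * M\<^sup>2)"
    using assms by (simp add: field_simps power2_eq_square power3_eq_cube)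
  also have "\<dots> \<le> 144 * L * (A + 2) / (u ^ 3 * M\<^sup>2)"
    using assms L by (intro divide_right_mono mult_left_mono) auto
  also have "\<dots> = 9 * (64 * (A + 2) * L / u ^ 3) / (4 * M\<^sup>2)" using assms by (simp add: field_simps)
  finally show ?thesis by (simp only: mult.assoc)
qed

lemma inverse_linear_step:
  fixes m C Kb :: real
  assumes m: "2 \<le> m" and C: "3 * Kb \<le> C" and Kb: "0 \<le> Kb"
  shows "(1 - 7 / (4 * m)) * (C / m) + 9 * Kb / (4 * m\<^sup>2) \<le> C / (m + 1)"
proof -
  have mp: "0 < m" using m by simp
  have "9 * Kb * (m + 1) \<le> 3 * C * (m + 1)" using C mp by (intro mult_right_mono) auto
  also have "\<dots> \<le> C * (3 * m + 7)" using C Kb by (simp add: algebra_simps)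
  finally have "(C * (4 * m - 7) + 9 * Kb) * (m + 1) \<le> C * (4 * m\<^sup>2)"
    by (simp add: algebra_simps power2_eq_square)
  then have "(C * (4 * m - 7) + 9 * Kb) / (4 * m\<^sup>2) \<le> C / (m + 1)"
    using mp by (simp add: field_simps)
  moreover have "(1 - 7 / (4 * m)) * (C / m) + 9 * Kb / (4 * m\<^sup>2) = (C * (4 * m - 7) + 9 * Kb) / (4 * m\<^sup>2)"
    using mp by (simp add: field_simps power2_eq_square)
  ultimately show ?thesis by simp
qed

lemma inverse_linear_bound:
  fixes a :: "nat \<Rightarrow> real" and K C b :: real
  assumes K: "2 \<le> K" and b: "0 \<le> b" and C: "3 * K * b \<le> C"
    and base: "a 0 \<le> C / K"
    and step: "\<And>k. a (Suc k) \<le> (1 - 7 / (4 * (real k + K))) * a k + 9 * K * b / (4 * (real k + K)\<^sup>2)"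
  shows "a k \<le> C / (real k + K)"
proof (induction k)
  case 0
  then show ?case using base by simp
next
  case (Suc k)
  define m where "m = real k + K"
  have m2: "2 \<le> m" using K by (simp add: m_def)
  have "a (Suc k) \<le> (1 - 7 / (4 * m)) * a k + 9 * (K * b) / (4 * m\<^sup>2)"
    using step[of k] by (simp add: m_def mult.assoc)
  also have "\<dots> \<le> (1 - 7 / (4 * m)) * (C / m) + 9 * (K * b) / (4 * m\<^sup>2)"
    using Suc.IH m2 by (intro add_right_mono mult_left_mono) (auto simp: m_def field_simps)
  also have "\<dots> \<le> C / (m + 1)"
    using inverse_linear_step[OF m2] C K b by (simp add: mult.assoc)
  finally show ?case by (simp add: m_def add.commute add.left_commute)
qed

section \<open>Expectations over finite distributions and trajectories\<close>

lemma sum_pmf_UNIV: "(\<Sum>x\<in>UNIV. pmf (p :: 'x::finite pmf) x) = 1"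
  by (rule sum_pmf_eq_1) auto

lemma sum_pmf_const: "(\<Sum>x\<in>UNIV. pmf (p :: 'x::finite pmf) x * c) = c"
  by (simp add: sum_pmf_UNIV flip: sum_distrib_right)

lemma expectation_finite_UNIV:
  fixes p :: "'x::finite pmf"
  shows "measure_pmf.expectation p f = (\<Sum>x\<in>UNIV. pmf p x * f x)"
  by (subst integral_measure_pmf_real[of UNIV]) (auto simp: mult.commute)

lemma sum_pmf_affine:
  fixes p :: "'x::finite pmf"
  shows "(\<Sum>x\<in>UNIV. pmf p x * (c + d * f x)) = c + d * (\<Sum>x\<in>UNIV. pmf p x * f x)"
proof -
  have "(\<Sum>x\<in>UNIV. pmf p x * (c + d * f x)) = (\<Sum>x\<in>UNIV. pmf p x) * c + d * (\<Sum>x\<in>UNIV. pmf p x * f x)"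
    by (simp add: sum.distrib sum_distrib_left sum_distrib_right algebra_simps)
  then show ?thesis by (simp add: sum_pmf_UNIV)
qed

lemma abs_mult_add_mult_le:
  fixes a b x y X Y :: real
  assumes "0 \<le> a" "0 \<le> b" "\<bar>x\<bar> \<le> X" "\<bar>y\<bar> \<le> Y"
  shows "\<bar>a * x + b * y\<bar> \<le> a * X + b * Y"
proof -
  have "\<bar>a * x + b * y\<bar> \<le> a * \<bar>x\<bar> + b * \<bar>y\<bar>"
    using abs_triangle_ineq[of "a * x" "b * y"] assms(1,2) by (simp add: abs_mult)
  also have "\<dots> \<le> a * X + b * Y" using assms by (intro add_mono mult_left_mono) auto
  finally show ?thesis .
qed

lemma abs_sum_pmf_le:
  fixes p :: "'x::finite pmf"
  assumes "\<And>x. \<bar>f x\<bar> \<le> g x"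
  shows "\<bar>\<Sum>x\<in>UNIV. pmf p x * f x\<bar> \<le> (\<Sum>x\<in>UNIV. pmf p x * g x)"
  by (rule order_trans[OF sum_abs sum_mono]) (simp add: abs_mult assms mult_left_mono)

lemma expectation_bind_finite:
  fixes h :: "'b \<Rightarrow> real"
  assumes "finite (set_pmf p)" "\<And>x. x \<in> set_pmf p \<Longrightarrow> finite (set_pmf (f x))"
  shows "measure_pmf.expectation (p \<bind> f) h
    = measure_pmf.expectation p (\<lambda>x. measure_pmf.expectation (f x) h)"
proof -
  have "measure_pmf.expectation (p \<bind> f) h = (\<Sum>a\<in>set_pmf p. pmf p a *\<^sub>R measure_pmf.expectation (f a) h)"
    using assms by (intro pmf_expectation_bind) auto
  also have "\<dots> = measure_pmf.expectation p (\<lambda>x. measure_pmf.expectation (f x) h)"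
    using assms by (subst integral_measure_pmf[of "set_pmf p"]) auto
  finally show ?thesis .
qed

lemma expectation_affine_on_support:
  fixes p :: "'x pmf" and f g :: "'x \<Rightarrow> real"
  assumes fin: "finite (set_pmf p)" and eq: "\<And>x. x \<in> set_pmf p \<Longrightarrow> f x = c + d * g x"
  shows "measure_pmf.expectation p f = c + d * measure_pmf.expectation p g"
proof -
  have "measure_pmf.expectation p f = measure_pmf.expectation p (\<lambda>x. c + d * g x)"
    using eq by (intro integral_cong_AE) (auto simp: AE_measure_pmf_iff)
  also have "\<dots> = c + d * measure_pmf.expectation p g"
    using integrable_measure_pmf_finite[OF fin, of g] by simp
  finally show ?thesis .
qed

lemma expectation_norm2m_sq_deriv:
  fixes p :: "'w pmf" and Y :: "'w \<Rightarrow> 's::finite \<Rightarrow> real"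
  assumes "finite (set_pmf p)"
  shows "measure_pmf.expectation p (\<lambda>\<omega>. norm2m_sq_deriv m x (Y \<omega>))
    = norm2m_sq_deriv m x (\<lambda>s. measure_pmf.expectation p (\<lambda>\<omega>. Y \<omega> s))"
proof -
  have int: "integrable (measure_pmf p) f" for f :: "'w \<Rightarrow> real"
    by (rule integrable_measure_pmf_finite[OF assms])
  show ?thesis
    by (simp add: norm2m_sq_deriv_def Bochner_Integration.integral_sum[OF int] int)
qed

lemma finite_set_pmf_traj:
  fixes P :: "'a::finite \<Rightarrow> 's::finite \<Rightarrow> 's pmf"
  shows "finite (set_pmf (traj P \<pi>' n s))"
  by (induction n arbitrary: s) (auto split: prod.splits intro!: finite_UN_I)

lemma traj_state_0: "\<tau> \<in> set_pmf (traj P \<pi>' n s) \<Longrightarrow> traj_state \<tau> 0 = s"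
  by (cases n) (auto simp: traj_state_def split: prod.splits)

lemma traj_state_Cons_0 [simp]: "traj_state ((s, a) # tr, sf) 0 = s"
  and traj_state_Cons_Suc [simp]: "traj_state ((s, a) # tr, sf) (Suc t) = traj_state (tr, sf) t"
  and traj_action_Cons_0 [simp]: "traj_action ((s, a) # tr, sf) 0 = a"
  and traj_action_Cons_Suc [simp]: "traj_action ((s, a) # tr, sf) (Suc t) = traj_action (tr, sf) t"
  by (simp_all add: traj_state_def traj_action_def)

lemma expectation_traj_Suc:
  fixes P :: "'a::finite \<Rightarrow> 's::finite \<Rightarrow> 's pmf" and h :: "('s \<times> 'a) list \<times> 's \<Rightarrow> real"
  shows "measure_pmf.expectation (traj P \<pi>' (Suc n) s) h =
    (\<Sum>a\<in>UNIV. pmf (\<pi>' s) a * (\<Sum>s'\<in>UNIV. pmf (P a s) s' *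
        measure_pmf.expectation (traj P \<pi>' n s') (\<lambda>\<tau>. h ((s, a) # fst \<tau>, snd \<tau>))))"
proof -
  have cons: "measure_pmf.expectation (traj P \<pi>' n s' \<bind> (\<lambda>(tr, sf). return_pmf ((s, a) # tr, sf))) h
      = measure_pmf.expectation (traj P \<pi>' n s') (\<lambda>\<tau>. h ((s, a) # fst \<tau>, snd \<tau>))" for a s'
    by (subst expectation_bind_finite) (auto simp: finite_set_pmf_traj case_prod_beta)
  have step: "measure_pmf.expectation
        (P a s \<bind> (\<lambda>s'. traj P \<pi>' n s' \<bind> (\<lambda>(tr, sf). return_pmf ((s, a) # tr, sf)))) h
     = (\<Sum>s'\<in>UNIV. pmf (P a s) s' * measure_pmf.expectation (traj P \<pi>' n s') (\<lambda>\<tau>. h ((s, a) # fst \<tau>, snd \<tau>)))"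
    for a
    by (subst expectation_bind_finite)
      (auto simp: finite_set_pmf_traj cons expectation_finite_UNIV split: prod.splits intro!: finite_UN_I)
  show ?thesis
    by (simp only: traj.simps, subst expectation_bind_finite)
      (auto simp: finite_set_pmf_traj step expectation_finite_UNIV split: prod.splits intro!: finite_UN_I)
qed

section \<open>The expected V-trace operator\<close>

locale vtrace =
  fixes P :: "'a::finite \<Rightarrow> 's::finite \<Rightarrow> 's pmf"
    and R :: "'s \<Rightarrow> 'a \<Rightarrow> real"
    and \<pi> \<pi>' :: "'s \<Rightarrow> 'a pmf"
    and \<beta> cbar \<rho>bar :: real
  assumes R_range: "\<And>s a. 0 \<le> R s a \<and> R s a \<le> 1"
    and beta: "0 < \<beta>" "\<beta> < 1"
    and supp: "\<And>s a. pmf (\<pi> s) a > 0 \<Longrightarrow> pmf (\<pi>' s) a > 0"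
    and trunc: "\<rho>bar \<ge> cbar" "cbar > 0"
begin

definition c_trunc :: "'s \<Rightarrow> 'a \<Rightarrow> real" where
  "c_trunc s a = min cbar (is_ratio \<pi> \<pi>' s a)"

definition rho_trunc :: "'s \<Rightarrow> 'a \<Rightarrow> real" where
  "rho_trunc s a = min \<rho>bar (is_ratio \<pi> \<pi>' s a)"

definition mean_c :: "'s \<Rightarrow> real" where
  "mean_c s = (\<Sum>a\<in>UNIV. pmf (\<pi>' s) a * c_trunc s a)"

definition mean_rho :: "'s \<Rightarrow> real" where
  "mean_rho s = (\<Sum>a\<in>UNIV. pmf (\<pi>' s) a * rho_trunc s a)"

abbreviation incr :: "nat \<Rightarrow> ('s \<Rightarrow> real) \<Rightarrow> ('s \<times> 'a) list \<times> 's \<Rightarrow> real" where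
  "incr n V \<tau> \<equiv> vtrace_incr R \<beta> \<pi> \<pi>' cbar \<rho>bar n V \<tau>"

definition expected_incr :: "nat \<Rightarrow> ('s \<Rightarrow> real) \<Rightarrow> 's \<Rightarrow> real" where
  "expected_incr n V s = measure_pmf.expectation (traj P \<pi>' n s) (incr n V)"

definition vtrace_op :: "nat \<Rightarrow> ('s \<Rightarrow> real) \<Rightarrow> 's \<Rightarrow> real" where
  "vtrace_op n V s = V s + expected_incr n V s"

abbreviation \<kappa>c :: real where "\<kappa>c \<equiv> kappa_c \<pi> \<pi>' cbar"
abbreviation \<kappa>\<rho> :: real where "\<kappa>\<rho> \<equiv> kappa_rho \<pi> \<pi>' \<rho>bar"

lemma is_ratio_nonneg: "0 \<le> is_ratio \<pi> \<pi>' s a"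
  by (simp add: is_ratio_def)

lemma c_trunc_nonneg: "0 \<le> c_trunc s a"
  and c_trunc_le_rho_trunc: "c_trunc s a \<le> rho_trunc s a"
  and rho_trunc_nonneg: "0 \<le> rho_trunc s a"
  using is_ratio_nonneg[of s a] trunc by (auto simp: c_trunc_def rho_trunc_def)

lemma pmf_mult_min_is_ratio:
  assumes "0 \<le> c"
  shows "pmf (\<pi>' s) a * min c (is_ratio \<pi> \<pi>' s a) = min (c * pmf (\<pi>' s) a) (pmf (\<pi> s) a)"
proof (cases "pmf (\<pi>' s) a = 0")
  case True
  then have "pmf (\<pi> s) a = 0" using supp[of s a] pmf_nonneg[of "\<pi> s" a] by linarith
  then show ?thesis using True by simp
next
  case False
  then have "0 < pmf (\<pi>' s) a" using pmf_nonneg[of "\<pi>' s" a] by linarith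
  then show ?thesis
    by (simp add: is_ratio_def min_mult_distrib_left mult.commute)
qed

lemma pmf_mult_rho_trunc: "pmf (\<pi>' s) a * rho_trunc s a = min (\<rho>bar * pmf (\<pi>' s) a) (pmf (\<pi> s) a)"
  unfolding rho_trunc_def using trunc by (intro pmf_mult_min_is_ratio) auto

lemma pmf_mult_c_trunc: "pmf (\<pi>' s) a * c_trunc s a = min (cbar * pmf (\<pi>' s) a) (pmf (\<pi> s) a)"
  unfolding c_trunc_def using trunc by (intro pmf_mult_min_is_ratio) auto

lemma mean_rho_le_1: "mean_rho s \<le> 1"
  using sum_mono[of UNIV "\<lambda>a. pmf (\<pi>' s) a * rho_trunc s a" "pmf (\<pi> s)"]
  by (simp add: mean_rho_def pmf_mult_rho_trunc sum_pmf_UNIV)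

lemma mean_c_le_1: "mean_c s \<le> 1"
  using sum_mono[of UNIV "\<lambda>a. pmf (\<pi>' s) a * c_trunc s a" "pmf (\<pi> s)"]
  by (simp add: mean_c_def pmf_mult_c_trunc sum_pmf_UNIV)

lemma mean_c_nonneg: "0 \<le> mean_c s"
  unfolding mean_c_def by (intro sum_nonneg) (simp add: c_trunc_nonneg)

lemma mean_rho_pos: "0 < mean_rho s"
proof -
  obtain a where a: "0 < pmf (\<pi> s) a"
    using sum_pmf_UNIV[of "\<pi> s"] pmf_nonneg[of "\<pi> s"]
    by (metis less_eq_real_def sum.neutral zero_neq_one)
  have "0 < pmf (\<pi>' s) a * rho_trunc s a" unfolding pmf_mult_rho_trunc using a supp[OF a] trunc by auto
  also have "\<dots> \<le> mean_rho s" unfolding mean_rho_def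
    by (rule member_le_sum) (auto simp: rho_trunc_nonneg)
  finally show ?thesis .
qed

lemma kappa_c_le: "\<kappa>c \<le> mean_c s"
  unfolding kappa_c_def by (rule Min_le) (auto simp: expectation_finite_UNIV mean_c_def c_trunc_def)

lemma kappa_rho_le: "\<kappa>\<rho> \<le> mean_rho s"
  unfolding kappa_rho_def by (rule Min_le) (auto simp: expectation_finite_UNIV mean_rho_def rho_trunc_def)

lemma kappa_c_nonneg: "0 \<le> \<kappa>c"
  unfolding kappa_c_def
  by (subst Min_ge_iff) (auto simp: expectation_finite_UNIV mean_c_nonneg simp flip: mean_c_def c_trunc_def)

lemma kappa_rho_pos: "0 < \<kappa>\<rho>"
  unfolding kappa_rho_def
  by (subst Min_gr_iff) (auto simp: expectation_finite_UNIV mean_rho_pos simp flip: mean_rho_def rho_trunc_def)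

lemma incr_Cons:
  "incr (Suc n) V ((s, a) # tr, sf) =
     rho_trunc s a * (R s a + \<beta> * V (traj_state (tr, sf) 0) - V s) + \<beta> * c_trunc s a * incr n V (tr, sf)"
  unfolding vtrace_incr_def
  by (simp add: sum.lessThan_Suc_shift prod.lessThan_Suc_shift c_trunc_def rho_trunc_def
      sum_distrib_left algebra_simps del: sum.lessThan_Suc prod.lessThan_Suc)

lemma expected_incr_0: "expected_incr 0 V s = 0"
  by (simp add: expected_incr_def vtrace_incr_def)

lemma expected_incr_Suc:
  "expected_incr (Suc n) V s = (\<Sum>a\<in>UNIV. pmf (\<pi>' s) a * (\<Sum>s'\<in>UNIV. pmf (P a s) s' *
      (rho_trunc s a * (R s a + \<beta> * V s' - V s) + \<beta> * c_trunc s a * expected_incr n V s')))"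
  unfolding expected_incr_def expectation_traj_Suc
  by (intro sum.cong refl arg_cong2[where f="(*)"] expectation_affine_on_support finite_set_pmf_traj)
    (auto simp: incr_Cons traj_state_0)

lemma vtrace_op_Suc:
  "vtrace_op (Suc n) V s = (1 - mean_rho s) * V s
     + (\<Sum>a\<in>UNIV. pmf (\<pi>' s) a * (\<Sum>s'\<in>UNIV. pmf (P a s) s' *
         (rho_trunc s a * R s a + \<beta> * (rho_trunc s a - c_trunc s a) * V s'
          + \<beta> * c_trunc s a * vtrace_op n V s')))"
proof -
  define X where "X a s' = rho_trunc s a * R s a + \<beta> * (rho_trunc s a - c_trunc s a) * V s'
    + \<beta> * c_trunc s a * vtrace_op n V s'" for a s'
  have "expected_incr (Suc n) V s
      = (\<Sum>a\<in>UNIV. pmf (\<pi>' s) a * (- (rho_trunc s a * V s) + 1 * (\<Sum>s'\<in>UNIV. pmf (P a s) s' * X a s')))"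
    unfolding expected_incr_Suc sum_pmf_affine[symmetric]
    by (intro sum.cong refl arg_cong2[where f="(*)"]) (simp add: X_def vtrace_op_def algebra_simps)
  also have "\<dots> = (\<Sum>a\<in>UNIV. pmf (\<pi>' s) a * (\<Sum>s'\<in>UNIV. pmf (P a s) s' * X a s')
      - V s * (pmf (\<pi>' s) a * rho_trunc s a))"
    by (intro sum.cong refl) (simp add: algebra_simps)
  also have "\<dots> = (\<Sum>a\<in>UNIV. pmf (\<pi>' s) a * (\<Sum>s'\<in>UNIV. pmf (P a s) s' * X a s')) - mean_rho s * V s"
    by (simp add: mean_rho_def sum_subtractf sum_distrib_left mult.commute)
  finally show ?thesis by (simp add: vtrace_op_def X_def algebra_simps)
qed

lemma vtrace_op_diff_Suc:
  "vtrace_op (Suc n) V s - vtrace_op (Suc n) W s = (1 - mean_rho s) * (V s - W s)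
     + (\<Sum>a\<in>UNIV. pmf (\<pi>' s) a * (\<Sum>s'\<in>UNIV. pmf (P a s) s' *
         (\<beta> * (rho_trunc s a - c_trunc s a) * (V s' - W s')
          + \<beta> * c_trunc s a * (vtrace_op n V s' - vtrace_op n W s'))))"
proof -
  define X where "X U a s' = rho_trunc s a * R s a + \<beta> * (rho_trunc s a - c_trunc s a) * U s'
    + \<beta> * c_trunc s a * vtrace_op n U s'" for U a s'
  have diff: "X V a s' - X W a s' = \<beta> * (rho_trunc s a - c_trunc s a) * (V s' - W s')
      + \<beta> * c_trunc s a * (vtrace_op n V s' - vtrace_op n W s')" for a s'
    by (simp add: X_def algebra_simps)
  have "vtrace_op (Suc n) V s - vtrace_op (Suc n) W s = (1 - mean_rho s) * (V s - W s)
      + ((\<Sum>a\<in>UNIV. pmf (\<pi>' s) a * (\<Sum>s'\<in>UNIV. pmf (P a s) s' * X V a s'))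
         - (\<Sum>a\<in>UNIV. pmf (\<pi>' s) a * (\<Sum>s'\<in>UNIV. pmf (P a s) s' * X W a s')))"
    unfolding vtrace_op_Suc X_def by (simp add: algebra_simps)
  also have "(\<Sum>a\<in>UNIV. pmf (\<pi>' s) a * (\<Sum>s'\<in>UNIV. pmf (P a s) s' * X V a s'))
      - (\<Sum>a\<in>UNIV. pmf (\<pi>' s) a * (\<Sum>s'\<in>UNIV. pmf (P a s) s' * X W a s'))
      = (\<Sum>a\<in>UNIV. pmf (\<pi>' s) a * (\<Sum>s'\<in>UNIV. pmf (P a s) s' * (X V a s' - X W a s')))"
    by (simp add: sum_subtractf right_diff_distrib)
  finally show ?thesis unfolding diff .
qed

definition contraction_coeff :: "nat \<Rightarrow> real" where
  "contraction_coeff k = 1 - (1 - \<beta>) * \<kappa>\<rho> * (\<Sum>t<k. (\<beta> * \<kappa>c) ^ t)"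

lemma contraction_coeff_Suc:
  "contraction_coeff (Suc k) = 1 - (1 - \<beta>) * \<kappa>\<rho> - \<beta> * \<kappa>c * (1 - contraction_coeff k)"
  unfolding contraction_coeff_def
  by (simp add: sum.lessThan_Suc_shift sum_distrib_left algebra_simps del: sum.lessThan_Suc)

lemma contraction_coeff_le_1: "contraction_coeff k \<le> 1"
  unfolding contraction_coeff_def using beta kappa_rho_pos kappa_c_nonneg
  by (auto intro!: mult_nonneg_nonneg sum_nonneg)

lemma contraction_coeff_Suc_ge:
  "1 - (1 - \<beta>) * mean_rho s - \<beta> * mean_c s * (1 - contraction_coeff k) \<le> contraction_coeff (Suc k)"
proof -
  have "(1 - \<beta>) * \<kappa>\<rho> \<le> (1 - \<beta>) * mean_rho s" using beta kappa_rho_le[of s] by simp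
  moreover have "\<beta> * \<kappa>c * (1 - contraction_coeff k) \<le> \<beta> * mean_c s * (1 - contraction_coeff k)"
    using beta kappa_c_le[of s] contraction_coeff_le_1[of k] by (intro mult_right_mono mult_left_mono) auto
  ultimately show ?thesis unfolding contraction_coeff_Suc by linarith
qed

lemma vtrace_op_contraction:
  "\<bar>vtrace_op k V s - vtrace_op k W s\<bar> \<le> contraction_coeff k * sup_norm (\<lambda>s. V s - W s)"
proof (induction k arbitrary: s)
  case 0
  then show ?case
    using sup_norm_ge[of "\<lambda>s. V s - W s" s] by (simp add: vtrace_op_def expected_incr_0 contraction_coeff_def)
next
  case (Suc k)
  define d where "d = sup_norm (\<lambda>s. V s - W s)"
  define g where "g = contraction_coeff k"
  have D: "\<bar>V s' - W s'\<bar> \<le> d" for s' unfolding d_def by (rule sup_norm_ge)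
  have T: "\<bar>vtrace_op k V s' - vtrace_op k W s'\<bar> \<le> g * d" for s'
    unfolding g_def d_def by (rule Suc.IH)
  have summand: "\<bar>\<beta> * (rho_trunc s a - c_trunc s a) * (V s' - W s') + \<beta> * c_trunc s a * (vtrace_op k V s' - vtrace_op k W s')\<bar>
      \<le> \<beta> * (rho_trunc s a - c_trunc s a) * d + \<beta> * c_trunc s a * (g * d)" for a s'
    using beta c_trunc_le_rho_trunc[of s a] c_trunc_nonneg[of s a] D T by (intro abs_mult_add_mult_le) auto
  have "\<bar>vtrace_op (Suc k) V s - vtrace_op (Suc k) W s\<bar>
      \<le> (1 - mean_rho s) * d + (\<Sum>a\<in>UNIV. pmf (\<pi>' s) a * (\<Sum>s'\<in>UNIV. pmf (P a s) s' *
           (\<beta> * (rho_trunc s a - c_trunc s a) * d + \<beta> * c_trunc s a * (g * d))))"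
  proof -
    have "\<bar>(1 - mean_rho s) * (V s - W s)\<bar> \<le> (1 - mean_rho s) * d"
      using mean_rho_le_1[of s] D[of s] by (simp add: abs_mult mult_left_mono)
    moreover have "\<bar>\<Sum>a\<in>UNIV. pmf (\<pi>' s) a * (\<Sum>s'\<in>UNIV. pmf (P a s) s' *
         (\<beta> * (rho_trunc s a - c_trunc s a) * (V s' - W s') + \<beta> * c_trunc s a * (vtrace_op k V s' - vtrace_op k W s')))\<bar>
      \<le> (\<Sum>a\<in>UNIV. pmf (\<pi>' s) a * (\<Sum>s'\<in>UNIV. pmf (P a s) s' *
           (\<beta> * (rho_trunc s a - c_trunc s a) * d + \<beta> * c_trunc s a * (g * d))))"
      by (intro abs_sum_pmf_le order_trans[OF abs_sum_pmf_le] order_refl summand)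
    ultimately show ?thesis unfolding vtrace_op_diff_Suc by linarith
  qed
  also have "\<dots> = (1 - mean_rho s) * d + (\<Sum>a\<in>UNIV. pmf (\<pi>' s) a *
           (\<beta> * (rho_trunc s a - c_trunc s a) * d + \<beta> * c_trunc s a * (g * d)))"
    by (simp add: sum_pmf_const)
  also have "\<dots> = d * (1 - (1 - \<beta>) * mean_rho s - \<beta> * mean_c s * (1 - g))"
    by (simp add: mean_rho_def mean_c_def algebra_simps sum.distrib sum_subtractf sum_distrib_left
        flip: sum_distrib_right)
  also have "\<dots> \<le> d * contraction_coeff (Suc k)"
    unfolding g_def d_def by (intro mult_left_mono contraction_coeff_Suc_ge sup_norm_nonneg)
  finally show ?case by (simp add: d_def mult.commute)
qed

abbreviation clipped :: "'s \<Rightarrow> 'a \<Rightarrow> real" where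
  "clipped \<equiv> clipped_policy \<rho>bar \<pi> \<pi>'"

abbreviation V_clipped :: "'s \<Rightarrow> real" where
  "V_clipped \<equiv> value_fun P R \<beta> clipped"

lemma clipped_policy_eq: "clipped s a = pmf (\<pi>' s) a * rho_trunc s a / mean_rho s"
  unfolding clipped_policy_def mean_rho_def pmf_mult_rho_trunc ..

lemma clipped_policy_nonneg: "0 \<le> clipped s a"
  unfolding clipped_policy_eq using mean_rho_pos[of s] rho_trunc_nonneg[of s a] by simp

lemma sum_clipped_policy: "(\<Sum>a\<in>UNIV. clipped s a) = 1"
  unfolding clipped_policy_eq using mean_rho_pos[of s]
  by (simp add: mean_rho_def flip: sum_divide_distrib)

lemma exp_reward_clipped_bounds: "0 \<le> exp_reward P R clipped k s \<and> exp_reward P R clipped k s \<le> 1"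
proof (induction k arbitrary: s)
  case 0
  have "(\<Sum>a\<in>UNIV. clipped s a * R s a) \<le> (\<Sum>a\<in>UNIV. clipped s a)"
    using R_range clipped_policy_nonneg by (intro sum_mono) (simp add: mult_left_le)
  moreover have "0 \<le> (\<Sum>a\<in>UNIV. clipped s a * R s a)"
    using R_range clipped_policy_nonneg by (intro sum_nonneg) simp
  ultimately show ?case by (simp add: sum_clipped_policy)
next
  case (Suc k)
  define E where "E a = (\<Sum>s'\<in>UNIV. pmf (P a s) s' * exp_reward P R clipped k s')" for a
  have "0 \<le> E a \<and> E a \<le> 1" for a
    using sum_mono[of UNIV "\<lambda>s'. pmf (P a s) s' * exp_reward P R clipped k s'" "pmf (P a s)"]
      Suc.IH by (auto simp: E_def sum_pmf_UNIV mult_left_le intro!: sum_nonneg)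
  then have "0 \<le> (\<Sum>a\<in>UNIV. clipped s a * E a) \<and> (\<Sum>a\<in>UNIV. clipped s a * E a) \<le> (\<Sum>a\<in>UNIV. clipped s a)"
    using clipped_policy_nonneg by (auto intro!: sum_nonneg sum_mono simp: mult_left_le)
  then show ?case by (simp add: E_def sum_clipped_policy)
qed

lemma summable_discounted_exp_reward: "summable (\<lambda>k. \<beta> ^ k * exp_reward P R clipped k s)"
proof (rule summable_comparison_test)
  show "\<exists>N. \<forall>n\<ge>N. norm (\<beta> ^ n * exp_reward P R clipped n s) \<le> \<beta> ^ n"
    using exp_reward_clipped_bounds beta by (auto simp: abs_mult intro!: mult_left_le)
  show "summable (\<lambda>k. \<beta> ^ k)" using beta by (simp add: summable_geometric)
qed

lemma Bellman_clipped:
  "V_clipped s = (\<Sum>a\<in>UNIV. clipped s a * (R s a + \<beta> * (\<Sum>s'\<in>UNIV. pmf (P a s) s' * V_clipped s')))"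
proof -
  note summable = summable_discounted_exp_reward
  have "V_clipped s = exp_reward P R clipped 0 s + (\<Sum>k. \<beta> ^ Suc k * exp_reward P R clipped (Suc k) s)"
    unfolding value_fun_def using suminf_split_head[OF summable[of s]] by simp
  also have "(\<Sum>k. \<beta> ^ Suc k * exp_reward P R clipped (Suc k) s)
     = (\<Sum>k. \<Sum>a\<in>UNIV. \<Sum>s'\<in>UNIV. \<beta> * (clipped s a * (pmf (P a s) s' * (\<beta> ^ k * exp_reward P R clipped k s'))))"
    by (simp add: sum_distrib_left algebra_simps)
  also have "\<dots> = (\<Sum>a\<in>UNIV. \<Sum>s'\<in>UNIV. \<Sum>k. \<beta> * (clipped s a * (pmf (P a s) s' * (\<beta> ^ k * exp_reward P R clipped k s'))))"
    by (simp add: suminf_sum summable_sum summable_mult summable)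
  also have "\<dots> = (\<Sum>a\<in>UNIV. \<Sum>s'\<in>UNIV. \<beta> * (clipped s a * (pmf (P a s) s' * V_clipped s')))"
    unfolding value_fun_def by (simp add: suminf_mult summable_mult summable)
  finally show ?thesis
    by (simp add: sum_distrib_left sum.distrib algebra_simps)
qed

text \<open>The clipped value function is the fixed point of the expected V-trace operator: the
  truncation ratios turn the behaviour policy into the clipped policy, up to the factor mean_rho.\<close>
lemma vtrace_op_V_clipped: "vtrace_op k V_clipped = V_clipped"
proof (induction k)
  case 0
  then show ?case by (simp add: fun_eq_iff vtrace_op_def expected_incr_0)
next
  case (Suc k)
  have "vtrace_op (Suc k) V_clipped s = V_clipped s" for s
  proof -
    define Q where "Q a = R s a + \<beta> * (\<Sum>s'\<in>UNIV. pmf (P a s) s' * V_clipped s')" for a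
    have inner: "(\<Sum>s'\<in>UNIV. pmf (P a s) s' * (rho_trunc s a * R s a
        + \<beta> * (rho_trunc s a - c_trunc s a) * V_clipped s' + \<beta> * c_trunc s a * V_clipped s'))
      = rho_trunc s a * Q a" for a
    proof -
      have "(\<Sum>s'\<in>UNIV. pmf (P a s) s' * (rho_trunc s a * R s a
          + \<beta> * (rho_trunc s a - c_trunc s a) * V_clipped s' + \<beta> * c_trunc s a * V_clipped s'))
        = (\<Sum>s'\<in>UNIV. pmf (P a s) s' * (rho_trunc s a * R s a + (rho_trunc s a * \<beta>) * V_clipped s'))"
        by (intro sum.cong refl) (simp add: algebra_simps)
      also have "\<dots> = rho_trunc s a * R s a + (rho_trunc s a * \<beta>) * (\<Sum>s'\<in>UNIV. pmf (P a s) s' * V_clipped s')"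
        by (rule sum_pmf_affine)
      finally show ?thesis by (simp add: Q_def algebra_simps)
    qed
    have "vtrace_op (Suc k) V_clipped s
        = (1 - mean_rho s) * V_clipped s + (\<Sum>a\<in>UNIV. pmf (\<pi>' s) a * (rho_trunc s a * Q a))"
      unfolding vtrace_op_Suc Suc.IH inner ..
    also have "(\<Sum>a\<in>UNIV. pmf (\<pi>' s) a * (rho_trunc s a * Q a)) = mean_rho s * (\<Sum>a\<in>UNIV. clipped s a * Q a)"
      using mean_rho_pos[of s] by (simp add: clipped_policy_eq sum_distrib_left mult.assoc)
    also have "(\<Sum>a\<in>UNIV. clipped s a * Q a) = V_clipped s"
      unfolding Q_def by (rule Bellman_clipped[symmetric])
    finally show ?thesis by (simp add: algebra_simps)
  qed
  then show ?case by auto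
qed

text \<open>The left-hand side of the contraction bound is an absolute value, so any pair of functions at
  distance 1 shows that the coefficient is nonnegative.\<close>
lemma contraction_coeff_nonneg: "0 \<le> contraction_coeff k"
  using vtrace_op_contraction[of k "\<lambda>_. 1" undefined "\<lambda>_. 0"]
    sup_norm_le[of "\<lambda>_::'s. 1::real" 1] sup_norm_ge[of "\<lambda>_::'s. 1::real" undefined]
  by (simp add: vtrace_op_def)

lemma contraction_coeff_eq_vtrace_gamma: "contraction_coeff n = vtrace_gamma \<beta> \<kappa>c \<kappa>\<rho> n"
proof -
  have "\<kappa>c \<le> 1" using kappa_c_le[of undefined] mean_c_le_1[of undefined] by linarith
  then have "\<beta> * \<kappa>c \<le> \<beta>" using beta mult_left_mono[of \<kappa>c 1 \<beta>] by simp
  then have "\<beta> * \<kappa>c \<noteq> 1" using beta by linarith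
  then have "(\<Sum>t<n. (\<beta> * \<kappa>c) ^ t) = (1 - (\<beta> * \<kappa>c) ^ n) / (1 - \<beta> * \<kappa>c)"
    by (simp add: sum_gp_strict)
  then show ?thesis
    unfolding contraction_coeff_def vtrace_gamma_def by simp
qed

lemma contraction_coeff_less_1:
  assumes "1 \<le> n"
  shows "contraction_coeff n < 1"
proof -
  have sum_ge: "1 \<le> (\<Sum>t<n. (\<beta> * \<kappa>c) ^ t)"
    using assms beta kappa_c_nonneg
    by (subst sum.remove[of _ 0]) (auto intro!: sum_nonneg)
  have "(1 - \<beta>) * \<kappa>\<rho> \<le> (1 - \<beta>) * \<kappa>\<rho> * (\<Sum>t<n. (\<beta> * \<kappa>c) ^ t)"
    using mult_left_mono[OF sum_ge, of "(1 - \<beta>) * \<kappa>\<rho>"] beta kappa_rho_pos by simp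
  moreover have "0 < (1 - \<beta>) * \<kappa>\<rho>" using beta kappa_rho_pos by simp
  ultimately show ?thesis unfolding contraction_coeff_def by linarith
qed

definition incr_bound_const :: "nat \<Rightarrow> real" where
  "incr_bound_const n = \<rho>bar * (\<Sum>t<n. (\<beta> * cbar) ^ t)"

lemma abs_incr_le: "\<bar>incr n V \<tau>\<bar> \<le> incr_bound_const n * (1 + 2 * sup_norm V)"
proof -
  define M where "M = sup_norm V"
  have VM: "\<bar>V s\<bar> \<le> M" for s by (simp add: M_def sup_norm_ge)
  have summand: "\<bar>\<beta> ^ t
        * (\<Prod>j<t. min cbar (is_ratio \<pi> \<pi>' (traj_state \<tau> j) (traj_action \<tau> j)))
        * min \<rho>bar (is_ratio \<pi> \<pi>' (traj_state \<tau> t) (traj_action \<tau> t))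
        * (R (traj_state \<tau> t) (traj_action \<tau> t) + \<beta> * V (traj_state \<tau> (Suc t)) - V (traj_state \<tau> t))\<bar>
      \<le> \<rho>bar * (\<beta> * cbar) ^ t * (1 + 2 * M)" for t
  proof -
    define c where "c = (\<Prod>j<t. min cbar (is_ratio \<pi> \<pi>' (traj_state \<tau> j) (traj_action \<tau> j)))"
    define \<rho> where "\<rho> = min \<rho>bar (is_ratio \<pi> \<pi>' (traj_state \<tau> t) (traj_action \<tau> t))"
    define \<delta> where "\<delta> = R (traj_state \<tau> t) (traj_action \<tau> t) + \<beta> * V (traj_state \<tau> (Suc t)) - V (traj_state \<tau> t)"
    have c: "0 \<le> c" "c \<le> cbar ^ t"
      unfolding c_def using trunc is_ratio_nonneg
        prod_mono[of "{..<t}" "\<lambda>j. min cbar (is_ratio \<pi> \<pi>' (traj_state \<tau> j) (traj_action \<tau> j))" "\<lambda>_. cbar"]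
      by (auto intro!: prod_nonneg)
    have \<rho>: "0 \<le> \<rho>" "\<rho> \<le> \<rho>bar" unfolding \<rho>_def using trunc is_ratio_nonneg by auto
    have "\<beta> * \<bar>V (traj_state \<tau> (Suc t))\<bar> \<le> \<bar>V (traj_state \<tau> (Suc t))\<bar>"
      using beta by (intro mult_left_le_one_le) auto
    then have "\<bar>\<beta> * V (traj_state \<tau> (Suc t))\<bar> \<le> M"
      using beta VM[of "traj_state \<tau> (Suc t)"] by (simp add: abs_mult)
    then have \<delta>: "\<bar>\<delta>\<bar> \<le> 1 + 2 * M"
      unfolding \<delta>_def using R_range[of "traj_state \<tau> t" "traj_action \<tau> t"] VM[of "traj_state \<tau> t"] by linarith
    have "\<bar>\<beta> ^ t * c * \<rho> * \<delta>\<bar> = \<beta> ^ t * c * \<rho> * \<bar>\<delta>\<bar>"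
      using beta c \<rho> by (simp add: abs_mult)
    also have "\<dots> \<le> \<beta> ^ t * cbar ^ t * \<rho>bar * (1 + 2 * M)"
      using beta c \<rho> \<delta> by (intro mult_mono) auto
    finally show ?thesis unfolding c_def \<rho>_def \<delta>_def by (simp add: power_mult_distrib mult_ac)
  qed
  have "\<bar>incr n V \<tau>\<bar> \<le> (\<Sum>t<n. \<rho>bar * (\<beta> * cbar) ^ t * (1 + 2 * M))"
    unfolding vtrace_incr_def by (rule order_trans[OF sum_abs sum_mono]) (rule summand)
  then show ?thesis by (simp add: M_def incr_bound_const_def sum_distrib_left sum_distrib_right)
qed

lemma incr_bound_const_sq_le: "(incr_bound_const n)\<^sup>2 \<le> vtrace_A \<beta> cbar \<rho>bar n / 32"
proof -
  define x where "x = \<beta> * cbar"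
  have x0: "0 < x" using beta trunc by (simp add: x_def)
  have S0: "0 \<le> (\<Sum>t<n. x ^ t)" using x0 by (intro sum_nonneg) simp
  have sq: "(\<rho>bar * (\<Sum>t<n. x ^ t))\<^sup>2 \<le> (\<rho>bar * B)\<^sup>2" if "(\<Sum>t<n. x ^ t) \<le> B" for B
    using that S0 trunc by (intro power_mono mult_left_mono) auto
  consider "x < 1" | "x = 1" | "1 < x" by linarith
  then show ?thesis
  proof cases
    case 1
    have "(\<Sum>t<n. x ^ t) = (1 - x ^ n) / (1 - x)" using 1 by (simp add: sum_gp_strict)
    also have "\<dots> \<le> 1 / (1 - x)" using 1 x0 by (intro divide_right_mono) auto
    finally have "(\<rho>bar * (\<Sum>t<n. x ^ t))\<^sup>2 \<le> (\<rho>bar * (1 / (1 - x)))\<^sup>2" by (rule sq)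
    then show ?thesis
      using 1 unfolding incr_bound_const_def vtrace_A_def x_def[symmetric] by (simp add: power_divide)
  next
    case 2
    then show ?thesis
      unfolding incr_bound_const_def vtrace_A_def x_def[symmetric] by (simp add: power_mult_distrib)
  next
    case 3
    have "(\<Sum>t<n. x ^ t) = (1 - x ^ n) / (1 - x)" using 3 by (simp add: sum_gp_strict)
    also have "\<dots> = (x ^ n - 1) / (x - 1)" by (metis minus_diff_eq minus_divide_divide)
    also have "\<dots> \<le> x ^ n / (x - 1)" using 3 by (intro divide_right_mono) auto
    finally have "(\<rho>bar * (\<Sum>t<n. x ^ t))\<^sup>2 \<le> (\<rho>bar * (x ^ n / (x - 1)))\<^sup>2" by (rule sq)
    moreover have "(\<rho>bar * (x ^ n / (x - 1)))\<^sup>2 = \<rho>bar\<^sup>2 * x ^ (2 * n) / (x - 1)\<^sup>2"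
      by (simp add: power_divide power_mult_distrib power_mult[symmetric] mult.commute[of 2 n])
    ultimately show ?thesis
      using 3 unfolding incr_bound_const_def vtrace_A_def x_def[symmetric] by simp
  qed
qed

lemma vtrace_A_nonneg: "0 \<le> vtrace_A \<beta> cbar \<rho>bar n"
  using incr_bound_const_sq_le[of n] zero_le_power2[of "incr_bound_const n"] by linarith

abbreviation traj_family :: "nat \<Rightarrow> ('s \<Rightarrow> ('s \<times> 'a) list \<times> 's) pmf" where
  "traj_family n \<equiv> Pi_pmf UNIV undefined (\<lambda>s. traj P \<pi>' n s)"

lemma finite_set_pmf_traj_family: "finite (set_pmf (traj_family n))"
  by (subst set_Pi_pmf) (auto intro!: finite_PiE_dflt simp: finite_set_pmf_traj)

lemma expectation_traj_family_component:
  fixes f :: "('s \<times> 'a) list \<times> 's \<Rightarrow> real"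
  shows "measure_pmf.expectation (traj_family n) (\<lambda>\<tau>s. f (\<tau>s s)) = measure_pmf.expectation (traj P \<pi>' n s) f"
proof -
  have "map_pmf (\<lambda>g. g s) (traj_family n) = traj P \<pi>' n s"
    by (subst Pi_pmf_component) auto
  moreover have "measure_pmf.expectation (map_pmf (\<lambda>g. g s) (traj_family n)) f
     = measure_pmf.expectation (traj_family n) (\<lambda>\<tau>s. f (\<tau>s s))"
    by simp
  ultimately show ?thesis by simp
qed

lemma finite_set_pmf_vtrace_dist: "finite (set_pmf (vtrace_dist P R \<beta> \<pi> \<pi>' cbar \<rho>bar n \<epsilon> V0 k))"
proof (induction k)
  case (Suc k)
  then show ?case using finite_set_pmf_traj_family by (auto intro!: finite_UN_I)
qed simp

lemma expectation_vtrace_dist_Suc: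
  fixes h :: "('s \<Rightarrow> real) \<Rightarrow> real"
  shows "measure_pmf.expectation (vtrace_dist P R \<beta> \<pi> \<pi>' cbar \<rho>bar n \<epsilon> V0 (Suc k)) h
   = measure_pmf.expectation (vtrace_dist P R \<beta> \<pi> \<pi>' cbar \<rho>bar n \<epsilon> V0 k)
      (\<lambda>V. measure_pmf.expectation (traj_family n) (\<lambda>\<tau>s. h (\<lambda>s. V s + \<epsilon> k * incr n V (\<tau>s s))))"
proof -
  have inner: "measure_pmf.expectation (traj_family n \<bind> (\<lambda>\<tau>s. return_pmf (\<lambda>s. V s + \<epsilon> k * incr n V (\<tau>s s)))) h
    = measure_pmf.expectation (traj_family n) (\<lambda>\<tau>s. h (\<lambda>s. V s + \<epsilon> k * incr n V (\<tau>s s)))" for V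
    by (subst expectation_bind_finite) (auto simp: finite_set_pmf_traj_family)
  show ?thesis
    unfolding vtrace_dist.simps(2)
    by (subst expectation_bind_finite) (simp_all add: finite_set_pmf_vtrace_dist finite_set_pmf_traj_family inner)
qed

section \<open>Drift of the smoothed error\<close>

lemma expectation_norm2m_sq_step:
  fixes V :: "'s \<Rightarrow> real"
  assumes m: "2 \<le> m" and \<eta>: "0 \<le> \<eta>"
  defines "x \<equiv> \<lambda>s. V s - V_clipped s"
  shows "measure_pmf.expectation (traj_family n)
           (\<lambda>\<tau>s. (norm2m m (\<lambda>s. V s + \<eta> * incr n V (\<tau>s s) - V_clipped s))\<^sup>2)
      \<le> (norm2m m x)\<^sup>2 + \<eta> * norm2m_sq_deriv m x (expected_incr n V)
        + (2 * real m - 1) * real CARD('s) powr (1 / real m)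
          * (\<eta> * incr_bound_const n * (1 + 2 * sup_norm V))\<^sup>2"
proof -
  define B where "B = \<eta> * incr_bound_const n * (1 + 2 * sup_norm V)"
  define c where "c = (2 * real m - 1) * real CARD('s) powr (1 / real m) * B\<^sup>2"
  have int: "integrable (measure_pmf (traj_family n)) f" for f :: "_ \<Rightarrow> real"
    by (rule integrable_measure_pmf_finite[OF finite_set_pmf_traj_family])
  have pointwise: "(norm2m m (\<lambda>s. V s + \<eta> * incr n V (\<tau>s s) - V_clipped s))\<^sup>2
      \<le> (norm2m m x)\<^sup>2 + norm2m_sq_deriv m x (\<lambda>s. \<eta> * incr n V (\<tau>s s)) + c" for \<tau>s
  proof -
    have "sup_norm (\<lambda>s. \<eta> * incr n V (\<tau>s s)) \<le> B"
      unfolding B_def using \<eta> abs_incr_le by (intro sup_norm_le) (simp add: abs_mult mult.assoc mult_left_mono)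
    moreover have "(\<lambda>s. V s + \<eta> * incr n V (\<tau>s s) - V_clipped s) = (\<lambda>s. x s + \<eta> * incr n V (\<tau>s s))"
      by (simp add: x_def fun_eq_iff)
    ultimately show ?thesis unfolding c_def by (simp add: norm2m_sq_Taylor_bound_sup_norm[OF m])
  qed
  have "measure_pmf.expectation (traj_family n)
        (\<lambda>\<tau>s. (norm2m m (\<lambda>s. V s + \<eta> * incr n V (\<tau>s s) - V_clipped s))\<^sup>2)
      \<le> measure_pmf.expectation (traj_family n)
        (\<lambda>\<tau>s. (norm2m m x)\<^sup>2 + norm2m_sq_deriv m x (\<lambda>s. \<eta> * incr n V (\<tau>s s)) + c)"
    by (intro integral_mono int pointwise)
  also have "\<dots> = (norm2m m x)\<^sup>2
      + measure_pmf.expectation (traj_family n) (\<lambda>\<tau>s. norm2m_sq_deriv m x (\<lambda>s. \<eta> * incr n V (\<tau>s s))) + c"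
    by (simp add: int)
  also have "measure_pmf.expectation (traj_family n) (\<lambda>\<tau>s. norm2m_sq_deriv m x (\<lambda>s. \<eta> * incr n V (\<tau>s s)))
      = norm2m_sq_deriv m x (\<lambda>s. \<eta> * expected_incr n V s)"
    unfolding expectation_norm2m_sq_deriv[OF finite_set_pmf_traj_family] expected_incr_def
    by (simp add: expectation_traj_family_component)
  also have "\<dots> = \<eta> * norm2m_sq_deriv m x (expected_incr n V)"
    by (rule norm2m_sq_deriv_scale)
  finally show ?thesis by (simp add: c_def B_def mult.assoc)
qed

lemma norm2m_sq_deriv_expected_incr_le:
  fixes V :: "'s \<Rightarrow> real"
  assumes m: "0 < m"
  defines "x \<equiv> \<lambda>s. V s - V_clipped s"
  shows "norm2m_sq_deriv m x (expected_incr n V)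
    \<le> - 2 * (1 - real CARD('s) powr (1 / (2 * real m)) * contraction_coeff n) * (norm2m m x)\<^sup>2"
proof -
  define f where "f s = vtrace_op n V s - V_clipped s" for s
  have "expected_incr n V = (\<lambda>s. f s + (- 1) * x s)"
    by (auto simp: f_def x_def vtrace_op_def)
  then have "norm2m_sq_deriv m x (expected_incr n V) = norm2m_sq_deriv m x f - 2 * (norm2m m x)\<^sup>2"
    by (simp only: norm2m_sq_deriv_add norm2m_sq_deriv_scale norm2m_sq_deriv_self[OF m])
  moreover have "norm2m_sq_deriv m x f
      \<le> 2 * real CARD('s) powr (1 / (2 * real m)) * contraction_coeff n * (norm2m m x)\<^sup>2"
  proof -
    have "sup_norm f \<le> contraction_coeff n * sup_norm x"
      using vtrace_op_contraction[of n V _ V_clipped]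
      by (intro sup_norm_le) (simp add: f_def x_def vtrace_op_V_clipped)
    also have "\<dots> \<le> contraction_coeff n * norm2m m x"
      using sup_norm_le_norm2m[OF m] contraction_coeff_nonneg by (intro mult_left_mono)
    finally have "norm2m m f \<le> real CARD('s) powr (1 / (2 * real m)) * (contraction_coeff n * norm2m m x)"
      using norm2m_le_sup_norm[OF m, of f] by (meson mult_left_mono order_trans powr_ge_zero)
    then have "2 * norm2m m x * norm2m m f
        \<le> 2 * norm2m m x * (real CARD('s) powr (1 / (2 * real m)) * (contraction_coeff n * norm2m m x))"
      using norm2m_nonneg[of m x] by (intro mult_left_mono) auto
    then have "norm2m_sq_deriv m x f
        \<le> 2 * norm2m m x * (real CARD('s) powr (1 / (2 * real m)) * (contraction_coeff n * norm2m m x))"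
      using norm2m_sq_deriv_le[OF m, of x f] by linarith
    then show ?thesis by (simp add: power2_eq_square mult_ac)
  qed
  ultimately show ?thesis by (simp add: algebra_simps)
qed

lemma incr_bound_sq_le:
  fixes V :: "'s \<Rightarrow> real"
  assumes m: "0 < m"
  defines "x \<equiv> \<lambda>s. V s - V_clipped s"
  shows "(incr_bound_const n * (1 + 2 * sup_norm V))\<^sup>2
    \<le> (3 / 8) * vtrace_A \<beta> cbar \<rho>bar n * ((norm2m m x)\<^sup>2 + ((sup_norm V_clipped)\<^sup>2 + 1))"
proof -
  have "sup_norm V \<le> sup_norm x + sup_norm V_clipped"
    using sup_norm_triangle[of x V_clipped] by (simp add: x_def)
  then have "(1 + 2 * sup_norm V)\<^sup>2 \<le> (1 + 2 * sup_norm x + 2 * sup_norm V_clipped)\<^sup>2"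
    using sup_norm_nonneg[of V] by (intro power_mono) auto
  \<comment> \<open>(a + b + c)^2 \<le> 3 (a^2 + b^2 + c^2)\<close>
  also have "\<dots> \<le> 12 * ((sup_norm x)\<^sup>2 + ((sup_norm V_clipped)\<^sup>2 + 1))"
    using sum_squares_ge_zero[of "1 - 2 * sup_norm x"]
      zero_le_power2[of "1 - 2 * sup_norm x"] zero_le_power2[of "1 - 2 * sup_norm V_clipped"]
      zero_le_power2[of "sup_norm x - sup_norm V_clipped"]
    by (simp add: power2_eq_square algebra_simps)
  also have "\<dots> \<le> 12 * ((norm2m m x)\<^sup>2 + ((sup_norm V_clipped)\<^sup>2 + 1))"
    using sup_norm_le_norm2m[OF m, of x] sup_norm_nonneg[of x] power_mono by simp
  finally have "(1 + 2 * sup_norm V)\<^sup>2 \<le> 12 * ((norm2m m x)\<^sup>2 + ((sup_norm V_clipped)\<^sup>2 + 1))" .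
  then have "(incr_bound_const n)\<^sup>2 * (1 + 2 * sup_norm V)\<^sup>2
      \<le> (vtrace_A \<beta> cbar \<rho>bar n / 32) * (12 * ((norm2m m x)\<^sup>2 + ((sup_norm V_clipped)\<^sup>2 + 1)))"
    using incr_bound_const_sq_le[of n] vtrace_A_nonneg by (intro mult_mono) auto
  moreover have "vtrace_A \<beta> cbar \<rho>bar n / 32 * (12 * ((norm2m m x)\<^sup>2 + ((sup_norm V_clipped)\<^sup>2 + 1)))
      = (3 / 8) * vtrace_A \<beta> cbar \<rho>bar n * ((norm2m m x)\<^sup>2 + ((sup_norm V_clipped)\<^sup>2 + 1))"
    by simp
  ultimately show ?thesis unfolding power_mult_distrib by linarith
qed

lemma expectation_norm2m_sq_step_le:
  fixes V :: "'s \<Rightarrow> real"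
  assumes m: "2 \<le> m" and \<eta>: "0 \<le> \<eta>"
  defines "x \<equiv> \<lambda>s. V s - V_clipped s"
  shows "measure_pmf.expectation (traj_family n)
           (\<lambda>\<tau>s. (norm2m m (\<lambda>s. V s + \<eta> * incr n V (\<tau>s s) - V_clipped s))\<^sup>2)
      \<le> (1 - 2 * \<eta> * (1 - real CARD('s) powr (1 / (2 * real m)) * contraction_coeff n)) * (norm2m m x)\<^sup>2
        + (3 / 8) * (2 * real m - 1) * real CARD('s) powr (1 / real m) * \<eta>\<^sup>2 * vtrace_A \<beta> cbar \<rho>bar n
          * ((norm2m m x)\<^sup>2 + ((sup_norm V_clipped)\<^sup>2 + 1))"
proof -
  have m0: "0 < m" using m by simp
  have "\<eta> * norm2m_sq_deriv m x (expected_incr n V)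
      \<le> \<eta> * (- 2 * (1 - real CARD('s) powr (1 / (2 * real m)) * contraction_coeff n) * (norm2m m x)\<^sup>2)"
    using norm2m_sq_deriv_expected_incr_le[OF m0, where V=V and n=n] \<eta> unfolding x_def by (intro mult_left_mono)
  moreover have "(2 * real m - 1) * real CARD('s) powr (1 / real m) * (\<eta> * incr_bound_const n * (1 + 2 * sup_norm V))\<^sup>2
      \<le> (2 * real m - 1) * real CARD('s) powr (1 / real m) * \<eta>\<^sup>2
        * ((3 / 8) * vtrace_A \<beta> cbar \<rho>bar n * ((norm2m m x)\<^sup>2 + ((sup_norm V_clipped)\<^sup>2 + 1)))"
    using incr_bound_sq_le[OF m0, where V=V and n=n] m unfolding x_def
    by (simp add: power_mult_distrib mult.assoc mult_left_mono)
  moreover have "(2 * real m - 1) * real CARD('s) powr (1 / real m) * \<eta>\<^sup>2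
        * ((3 / 8) * vtrace_A \<beta> cbar \<rho>bar n * ((norm2m m x)\<^sup>2 + ((sup_norm V_clipped)\<^sup>2 + 1)))
      = (3 / 8) * (2 * real m - 1) * real CARD('s) powr (1 / real m) * \<eta>\<^sup>2 * vtrace_A \<beta> cbar \<rho>bar n
          * ((norm2m m x)\<^sup>2 + ((sup_norm V_clipped)\<^sup>2 + 1))"
    by (simp only: ac_simps)
  moreover have "(1 - 2 * \<eta> * (1 - real CARD('s) powr (1 / (2 * real m)) * contraction_coeff n)) * (norm2m m x)\<^sup>2
      = (norm2m m x)\<^sup>2 + \<eta> * (- 2 * (1 - real CARD('s) powr (1 / (2 * real m)) * contraction_coeff n) * (norm2m m x)\<^sup>2)"
    by (simp add: algebra_simps)
  ultimately show ?thesis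
    using expectation_norm2m_sq_step[OF m \<eta>, where V=V and n=n] unfolding x_def by linarith
qed

lemma expectation_norm2m_sq_Suc_le:
  fixes V0 :: "'s \<Rightarrow> real" and \<epsilon> :: "nat \<Rightarrow> real" and n :: nat
  assumes m: "2 \<le> m" and \<epsilon>: "0 \<le> \<epsilon> k"
  defines "a \<equiv> \<lambda>k. measure_pmf.expectation (vtrace_dist P R \<beta> \<pi> \<pi>' cbar \<rho>bar n \<epsilon> V0 k)
                      (\<lambda>V. (norm2m m (\<lambda>s. V s - V_clipped s))\<^sup>2)"
  shows "a (Suc k) \<le> (1 - 2 * \<epsilon> k * (1 - real CARD('s) powr (1 / (2 * real m)) * contraction_coeff n)) * a k
     + (3 / 8) * (2 * real m - 1) * real CARD('s) powr (1 / real m) * (\<epsilon> k)\<^sup>2 * vtrace_A \<beta> cbar \<rho>bar n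
       * (a k + ((sup_norm V_clipped)\<^sup>2 + 1))"
proof -
  define D where "D = vtrace_dist P R \<beta> \<pi> \<pi>' cbar \<rho>bar n \<epsilon> V0 k"
  define \<alpha> where "\<alpha> = 1 - 2 * \<epsilon> k * (1 - real CARD('s) powr (1 / (2 * real m)) * contraction_coeff n)"
  define q where "q = (3 / 8) * (2 * real m - 1) * real CARD('s) powr (1 / real m) * (\<epsilon> k)\<^sup>2 * vtrace_A \<beta> cbar \<rho>bar n"
  define b where "b = (sup_norm V_clipped)\<^sup>2 + 1"
  have int: "integrable (measure_pmf D) f" for f :: "_ \<Rightarrow> real"
    unfolding D_def by (rule integrable_measure_pmf_finite[OF finite_set_pmf_vtrace_dist])
  have "a (Suc k) = measure_pmf.expectation D (\<lambda>V. measure_pmf.expectation (traj_family n)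
         (\<lambda>\<tau>s. (norm2m m (\<lambda>s. V s + \<epsilon> k * incr n V (\<tau>s s) - V_clipped s))\<^sup>2))"
    unfolding a_def D_def expectation_vtrace_dist_Suc by simp
  also have "\<dots> \<le> measure_pmf.expectation D
      (\<lambda>V. \<alpha> * (norm2m m (\<lambda>s. V s - V_clipped s))\<^sup>2 + q * ((norm2m m (\<lambda>s. V s - V_clipped s))\<^sup>2 + b))"
    unfolding \<alpha>_def q_def b_def by (intro integral_mono int expectation_norm2m_sq_step_le[OF m \<epsilon>])
  also have "\<dots> = \<alpha> * a k + q * (a k + b)"
    unfolding a_def D_def[symmetric] by (simp add: int algebra_simps)
  finally show ?thesis unfolding \<alpha>_def q_def b_def .
qed

lemma expectation_norm2m_sq_recursion:
  fixes V0 :: "'s \<Rightarrow> real" and \<epsilon> :: "nat \<Rightarrow> real" and n m :: nat and u L K :: real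
  assumes m: "2 \<le> m" "2 * real m - 1 \<le> 8 * (L / u)" "real CARD('s) powr (1 / real m) \<le> 3"
      "real CARD('s) powr (1 / (2 * real m)) * (1 - u) \<le> 1 - u / 2"
    and u: "u = 1 - contraction_coeff n" "0 < u"
    and K: "K = 64 * (vtrace_A \<beta> cbar \<rho>bar n + 2) * L / u ^ 3" "64 \<le> K"
    and \<epsilon>: "\<And>j. \<epsilon> j = (4 / u) / (real j + K)"
  defines "a \<equiv> \<lambda>k. measure_pmf.expectation (vtrace_dist P R \<beta> \<pi> \<pi>' cbar \<rho>bar n \<epsilon> V0 k)
                      (\<lambda>V. (norm2m m (\<lambda>s. V s - V_clipped s))\<^sup>2)"
  shows "a (Suc j) \<le> (1 - 7 / (4 * (real j + K))) * a j
    + 9 * K * ((sup_norm V_clipped)\<^sup>2 + 1) / (4 * (real j + K)\<^sup>2)"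
proof -
  define A where "A = vtrace_A \<beta> cbar \<rho>bar n"
  define b where "b = (sup_norm V_clipped)\<^sup>2 + 1"
  define M where "M = real j + K"
  define \<eta> where "\<eta> = \<epsilon> j"
  define c1 where "c1 = real CARD('s) powr (1 / real m)"
  have MK: "K \<le> M" "0 < M" using K by (auto simp: M_def)
  have \<eta>M: "\<eta> = (4 / u) / M" by (simp add: \<eta>_def M_def \<epsilon>)
  have \<eta>0: "0 \<le> \<eta>" using \<eta>M u MK by simp
  have a0: "0 \<le> a j" unfolding a_def by (intro Bochner_Integration.integral_nonneg) simp
  define \<alpha> where "\<alpha> = 1 - 2 * \<eta> * (1 - real CARD('s) powr (1 / (2 * real m)) * contraction_coeff n)"
  define q where "q = (3 / 8) * (2 * real m - 1) * c1 * \<eta>\<^sup>2 * A"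
  have rec: "a (Suc j) \<le> \<alpha> * a j + q * (a j + b)"
    using expectation_norm2m_sq_Suc_le[OF m(1), of \<epsilon> j n V0] \<eta>0
    unfolding a_def \<alpha>_def q_def b_def c1_def \<eta>_def A_def by simp
  \<comment> \<open>the drift: the contraction of the expected update beats the loss of norm2m over the sup norm\<close>
  have "1 - u = contraction_coeff n" using u(1) by simp
  with m(4) have "real CARD('s) powr (1 / (2 * real m)) * contraction_coeff n \<le> 1 - u / 2"
    by simp
  then have "u / 2 \<le> 1 - real CARD('s) powr (1 / (2 * real m)) * contraction_coeff n"
    by linarith
  then have "2 * \<eta> * (u / 2) \<le> 2 * \<eta> * (1 - real CARD('s) powr (1 / (2 * real m)) * contraction_coeff n)"
    using \<eta>0 by (intro mult_left_mono) auto
  moreover have "2 * \<eta> * (u / 2) = 4 / M" using u MK by (simp add: \<eta>M field_simps)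
  ultimately have \<alpha>: "\<alpha> \<le> 1 - 4 / M" unfolding \<alpha>_def by linarith
  have q: "q \<le> 9 * K / (4 * M\<^sup>2)"
    unfolding q_def \<eta>M K(1) c1_def A_def using m MK u(2) vtrace_A_nonneg[of n] by (intro noise_coeff_le) auto
  also have "\<dots> \<le> 9 * M / (4 * M\<^sup>2)" using MK by (intro divide_right_mono) auto
  also have "\<dots> = 9 / (4 * M)" using MK by (simp add: power2_eq_square)
  finally have "\<alpha> + q \<le> 1 - 7 / (4 * M)" using \<alpha> by simp
  then have "(\<alpha> + q) * a j + q * b \<le> (1 - 7 / (4 * M)) * a j + 9 * K / (4 * M\<^sup>2) * b"
    using q a0 by (intro add_mono mult_right_mono) (auto simp: b_def)
  with rec show ?thesis by (simp add: M_def b_def algebra_simps)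
qed

lemma expectation_norm2m_sq_le:
  fixes V0 :: "'s \<Rightarrow> real" and \<epsilon> :: "nat \<Rightarrow> real" and n m :: nat and u L K :: real
  assumes m: "2 \<le> m" "2 * real m - 1 \<le> 8 * (L / u)" "real CARD('s) powr (1 / real m) \<le> 3"
      "real CARD('s) powr (1 / (2 * real m)) * (1 - u) \<le> 1 - u / 2"
    and u: "u = 1 - contraction_coeff n" "0 < u"
    and K: "K = 64 * (vtrace_A \<beta> cbar \<rho>bar n + 2) * L / u ^ 3" "64 \<le> K"
    and \<epsilon>: "\<And>j. \<epsilon> j = (4 / u) / (real j + K)"
  defines "e \<equiv> 3 * (sup_norm (\<lambda>s. V0 s - V_clipped s))\<^sup>2 + 3 * ((sup_norm V_clipped)\<^sup>2 + 1)"
  shows "measure_pmf.expectation (vtrace_dist P R \<beta> \<pi> \<pi>' cbar \<rho>bar n \<epsilon> V0 k)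
      (\<lambda>V. (norm2m m (\<lambda>s. V s - V_clipped s))\<^sup>2) \<le> K * e / (real k + K)"
proof -
  define a where "a k = measure_pmf.expectation (vtrace_dist P R \<beta> \<pi> \<pi>' cbar \<rho>bar n \<epsilon> V0 k)
    (\<lambda>V. (norm2m m (\<lambda>s. V s - V_clipped s))\<^sup>2)" for k
  have "a 0 \<le> real CARD('s) powr (1 / real m) * (sup_norm (\<lambda>s. V0 s - V_clipped s))\<^sup>2"
    unfolding a_def using m(1) by (simp add: norm2m_sq_le_sup_norm_sq)
  also have "\<dots> \<le> 3 * (sup_norm (\<lambda>s. V0 s - V_clipped s))\<^sup>2" using m(3) by (intro mult_right_mono) auto
  also have "\<dots> \<le> K * e / K" using K(2) by (simp add: e_def)
  finally have base: "a 0 \<le> K * e / K" .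
  have rec: "a (Suc j) \<le> (1 - 7 / (4 * (real j + K))) * a j
      + 9 * K * ((sup_norm V_clipped)\<^sup>2 + 1) / (4 * (real j + K)\<^sup>2)" for j
    unfolding a_def by (rule expectation_norm2m_sq_recursion[OF m u K \<epsilon>])
  have "3 * K * ((sup_norm V_clipped)\<^sup>2 + 1) \<le> K * e" using K(2) by (simp add: e_def algebra_simps)
  then show ?thesis
    using K(2) inverse_linear_bound[OF _ _ _ base rec] unfolding a_def by simp
qed

lemma expectation_sup_norm_sq_le:
  fixes V0 :: "'s \<Rightarrow> real" and \<epsilon> :: "nat \<Rightarrow> real" and n m :: nat and u L K :: real
  assumes m: "2 \<le> m" "2 * real m - 1 \<le> 8 * (L / u)" "real CARD('s) powr (1 / real m) \<le> 3"
      "real CARD('s) powr (1 / (2 * real m)) * (1 - u) \<le> 1 - u / 2"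
    and u: "u = 1 - contraction_coeff n" "0 < u"
    and L: "1 / 2 \<le> L"
    and K: "K = 64 * (vtrace_A \<beta> cbar \<rho>bar n + 2) * L / u ^ 3"
    and \<epsilon>: "\<And>j. \<epsilon> j = (4 / u) / (real j + K)"
  defines "e \<equiv> (sup_norm (\<lambda>s. V0 s - V_clipped s))\<^sup>2 + 2 * (sup_norm V_clipped)\<^sup>2 + 1"
  shows "measure_pmf.expectation (vtrace_dist P R \<beta> \<pi> \<pi>' cbar \<rho>bar n \<epsilon> V0 k)
           (\<lambda>V. (sup_norm (\<lambda>s. V s - V_clipped s))\<^sup>2)
    \<le> 1024 * exp 2 * e * ((vtrace_A \<beta> cbar \<rho>bar n + 2) * L / u ^ 3) * (1 / (real k + K))"
proof -
  have "u ^ 3 \<le> 1" using u contraction_coeff_nonneg[of n] by (simp add: power_le_one)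
  also have "1 \<le> (vtrace_A \<beta> cbar \<rho>bar n + 2) * L"
    using L vtrace_A_nonneg[of n] mult_mono[of 2 "vtrace_A \<beta> cbar \<rho>bar n + 2" "1 / 2" L] by simp
  finally have K64: "64 \<le> K" using u(2) by (simp add: K field_simps)
  have "measure_pmf.expectation (vtrace_dist P R \<beta> \<pi> \<pi>' cbar \<rho>bar n \<epsilon> V0 k)
      (\<lambda>V. (sup_norm (\<lambda>s. V s - V_clipped s))\<^sup>2)
    \<le> measure_pmf.expectation (vtrace_dist P R \<beta> \<pi> \<pi>' cbar \<rho>bar n \<epsilon> V0 k)
      (\<lambda>V. (norm2m m (\<lambda>s. V s - V_clipped s))\<^sup>2)"
    using m(1) by (intro integral_mono integrable_measure_pmf_finite finite_set_pmf_vtrace_dist power_mono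
        sup_norm_le_norm2m sup_norm_nonneg) auto
  also have "\<dots> \<le> K * (3 * (sup_norm (\<lambda>s. V0 s - V_clipped s))\<^sup>2 + 3 * ((sup_norm V_clipped)\<^sup>2 + 1)) / (real k + K)"
    by (rule expectation_norm2m_sq_le[OF m u K K64 \<epsilon>])
  also have "\<dots> \<le> K * (16 * exp 2 * e) / (real k + K)"
  proof -
    have "3 * (sup_norm (\<lambda>s. V0 s - V_clipped s))\<^sup>2 + 3 * ((sup_norm V_clipped)\<^sup>2 + 1) \<le> 16 * e"
      by (simp add: e_def)
    also have "\<dots> \<le> 16 * exp 2 * e"
    proof -
      have "0 \<le> e" by (simp add: e_def)
      then show ?thesis using mult_right_mono[of 1 "exp 2" "16 * e"] by (simp add: mult_ac)
    qed
    finally show ?thesis using K64 by (intro divide_right_mono mult_left_mono) auto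
  qed
  also have "\<dots> = 1024 * exp 2 * e * ((vtrace_A \<beta> cbar \<rho>bar n + 2) * L / u ^ 3) * (1 / (real k + K))"
    by (simp add: K)
  finally show ?thesis .
qed

end

theorem theorem3:
  fixes P :: "'a::finite \<Rightarrow> 's::finite \<Rightarrow> 's pmf"
    and R :: "'s \<Rightarrow> 'a \<Rightarrow> real"
    and \<pi> \<pi>' :: "'s \<Rightarrow> 'a pmf"
    and \<beta> cbar \<rho>bar :: real and n :: nat and V0 :: "'s \<Rightarrow> real"
  assumes R_range: "\<And>s a. 0 \<le> R s a \<and> R s a \<le> 1"
    and beta: "0 < \<beta>" "\<beta> < 1"
    and supp: "\<And>s a. pmf (\<pi> s) a > 0 \<Longrightarrow> pmf (\<pi>' s) a > 0"
    and trunc: "\<rho>bar \<ge> cbar" "cbar > 0"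
    and n: "n \<ge> 1"
    and S2: "CARD('s) \<ge> 2"
  defines "\<gamma> \<equiv> vtrace_gamma \<beta> (kappa_c \<pi> \<pi>' cbar) (kappa_rho \<pi> \<pi>' \<rho>bar) n"
    and "A \<equiv> vtrace_A \<beta> cbar \<rho>bar n"
    and "K \<equiv> 64 * (vtrace_A \<beta> cbar \<rho>bar n + 2) * ln (real CARD('s)) / (1 - vtrace_gamma \<beta> (kappa_c \<pi> \<pi>' cbar) (kappa_rho \<pi> \<pi>' \<rho>bar) n) ^ 3"
    and "\<epsilon> \<equiv> (\<lambda>k::nat. (4 / (1 - vtrace_gamma \<beta> (kappa_c \<pi> \<pi>' cbar) (kappa_rho \<pi> \<pi>' \<rho>bar) n)) / (real k + 64 * (vtrace_A \<beta> cbar \<rho>bar n + 2) * ln (real CARD('s)) / (1 - vtrace_gamma \<beta> (kappa_c \<pi> \<pi>' cbar) (kappa_rho \<pi> \<pi>' \<rho>bar) n) ^ 3))"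
    and "Vstar \<equiv> value_fun P R \<beta> (clipped_policy \<rho>bar \<pi> \<pi>')"
  shows "\<forall>k::nat.
     measure_pmf.expectation (vtrace_dist P R \<beta> \<pi> \<pi>' cbar \<rho>bar n \<epsilon> V0 k)
        (\<lambda>V. (sup_norm (\<lambda>s. V s - Vstar s))\<^sup>2)
     \<le> 1024 * exp 2 * ((sup_norm (\<lambda>s. V0 s - Vstar s))\<^sup>2 + 2 * (sup_norm Vstar)\<^sup>2 + 1)
        * ((A + 2) * ln (real CARD('s)) / (1 - \<gamma>) ^ 3) * (1 / (real k + K))"
proof
  fix k
  interpret vtrace P R \<pi> \<pi>' \<beta> cbar \<rho>bar
    using R_range beta supp trunc by unfold_locales auto
  define u where "u = 1 - \<gamma>"
  have u: "u = 1 - contraction_coeff n" "0 < u" "u \<le> 1"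
    using contraction_coeff_less_1[OF n] contraction_coeff_nonneg[of n]
    by (auto simp: u_def \<gamma>_def contraction_coeff_eq_vtrace_gamma)
  obtain m where "2 \<le> m" "2 * real m - 1 \<le> 8 * (ln (real CARD('s)) / u)"
      "real CARD('s) powr (1 / real m) \<le> 3" "real CARD('s) powr (1 / (2 * real m)) * (1 - u) \<le> 1 - u / 2"
    using exists_smoothing_exponent[of "real CARD('s)" u] S2 u by auto
  moreover have "1 / 2 \<le> ln (real CARD('s))"
  proof -
    have "ln 2 \<le> ln (real CARD('s))" using S2 by simp
    then show ?thesis using ln2_ge_two_thirds by linarith
  qed
  moreover have "K = 64 * (vtrace_A \<beta> cbar \<rho>bar n + 2) * ln (real CARD('s)) / u ^ 3"
    by (simp add: K_def u_def \<gamma>_def)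
  moreover have "\<epsilon> j = (4 / u) / (real j + K)" for j
    by (simp add: \<epsilon>_def K_def u_def \<gamma>_def)
  ultimately show "measure_pmf.expectation (vtrace_dist P R \<beta> \<pi> \<pi>' cbar \<rho>bar n \<epsilon> V0 k)
        (\<lambda>V. (sup_norm (\<lambda>s. V s - Vstar s))\<^sup>2)
     \<le> 1024 * exp 2 * ((sup_norm (\<lambda>s. V0 s - Vstar s))\<^sup>2 + 2 * (sup_norm Vstar)\<^sup>2 + 1)
        * ((A + 2) * ln (real CARD('s)) / (1 - \<gamma>) ^ 3) * (1 / (real k + K))"
    using expectation_sup_norm_sq_le[OF _ _ _ _ u(1,2)] unfolding Vstar_def A_def u_def by blast
qed

end
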